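(* Let $\Lambda\subseteq[\mu,L]$ be compact with $0<\mu<L$ and $K\ge1$, let $\sigma_K^\Lambda$ be the optimal link polynomial of degree $K$ (defined in the context), and set $\sigma_0=\sigma_K^\Lambda(0)$. Suppose $m\in(0,1)$ and $h_0,\dots,h_{K-1}\in\mathbb{R}$ satisfy $\sigma(\lambda;\{h_i\},m)=\sigma_K^\Lambda(\lambda)$ for all $\lambda\in\mathbb{R}$. Then: (1) these parameters minimize the asymptotic rate factor of $\mathrm{HB}_K(h_0,\dots,h_{K-1};m)$ over $\mathcal{C}_\Lambda$ (as given by the formula in terms of $\sigma_*=\sup_\Lambda|\sigma(\cdot;\{h_i\},m)|$: $\sqrt m$ if $\sigma_*\le1$, $\sqrt m(\sigma_*+\sqrt{\sigma_*^2-1})^{1/K}$ otherwise) among all choices of $m\in(0,1)$ and $K$ step-sizes; (2) $m=\big(\sigma_0-\sqrt{\sigma_0^2-1}\big)^{2/K}$; (3) the residual polynomials $P_t$ of the method (i.e. $x_t-x_*=P_t(H)(x_0-x_* )$) satisfy, for all $n\ge0$, $P_{(n+2)K}(\lambda)=2a_\infty\sigma_K^\Lambda(\lambda)P_{(n+1)K}(\lambda)-a_\infty^2P_{nK}(\lambda)$, where $a_\infty=\sigma_0-\sqrt{\sigma_0^2-1}$; (4) the worst-case rate satisfies $r_t=O\big(t(\sigma_0-\sqrt{\sigma_0^2-1})^{t/K}\big)$ and the asymptotic rate factor is $1-\tau=(\sigma_0-\sqrt{\sigma_0^2-1})^{1/K}$.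
   Context: $\mathbb{R}_K[X]$ is the set of real polynomials of degree at most $K$. The optimal link polynomial $\sigma_K^\Lambda$ is the maximizer of $\sigma(0)$ over $\sigma\in\mathbb{R}_K[X]$ subject to $\sup_{\lambda\in\Lambda}|\sigma(\lambda)|\le1$. For $m\in(0,1)$ and $h_0,\dots,h_{K-1}$, $\sigma(\lambda;\{h_i\},m)=\tfrac12\operatorname{Tr}(M_1\cdots M_K)$ with $M_i=\begin{pmatrix}\frac{1+m-h_{K-i}\lambda}{\sqrt m}&-1\\1&0\end{pmatrix}$. $\mathcal{C}_\Lambda$ is the class of all quadratics $f(x)=\tfrac12(x-x_* )^\top H(x-x_* )+f_*$ on $\mathbb{R}^d$ (any $d$) with $H$ symmetric and $\mathrm{Sp}(H)\subseteq\Lambda$. The cyclical heavy ball method $\mathrm{HB}_K(h_0,\dots,h_{K-1};m)$ produces $x_1=x_0-\frac{h_0}{1+m}\nabla f(x_0)$ and $x_{t+1}=x_t-h_{t\bmod K}\nabla f(x_t)+m(x_t-x_{t-1})$ for $t\ge1$. Worst-case rate $r_t=\sup_{f\in\mathcal{C}_\Lambda,x_0\ne x_*}\|x_t-x_*\|/\|x_0-x_*\|$; asymptotic rate factor $1-\tau=\limsup_t r_t^{1/t}$. *)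

theory Defs
  imports Complex_Main
    "Jordan_Normal_Form.Char_Poly"
    "HOL-Computational_Algebra.Polynomial"
    "HOL-Library.Landau_Symbols"
    "HOL-Library.Extended_Real"
begin

definition is_optimal_link_poly :: "nat \<Rightarrow> real set \<Rightarrow> real poly \<Rightarrow> bool" where
  "is_optimal_link_poly K Lam s \<longleftrightarrow>
     degree s \<le> K \<and> (\<forall>l\<in>Lam. \<bar>poly s l\<bar> \<le> 1) \<and>
     (\<forall>q :: real poly. degree q \<le> K \<longrightarrow> (\<forall>l\<in>Lam. \<bar>poly q l\<bar> \<le> 1) \<longrightarrow> poly q 0 \<le> poly s 0)"

definition link_mat :: "(nat \<Rightarrow> real) \<Rightarrow> real \<Rightarrow> nat \<Rightarrow> real \<Rightarrow> nat \<Rightarrow> real mat" where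
  "link_mat h m K lam i =
     mat_of_rows_list 2 [[(1 + m - h (K - i) * lam) / sqrt m, -1], [1, 0]]"

definition trace2 :: "real mat \<Rightarrow> real" where
  "trace2 A = A $$ (0,0) + A $$ (1,1)"

definition link_sigma :: "(nat \<Rightarrow> real) \<Rightarrow> real \<Rightarrow> nat \<Rightarrow> real \<Rightarrow> real" where
  "link_sigma h m K lam =
     trace2 (foldr (\<lambda>i A. link_mat h m K lam i * A) [1..<K+1] (1\<^sub>m 2)) / 2"

definition sigma_star :: "real set \<Rightarrow> (nat \<Rightarrow> real) \<Rightarrow> real \<Rightarrow> nat \<Rightarrow> real" where
  "sigma_star Lam h m K = (SUP l\<in>Lam. \<bar>link_sigma h m K l\<bar>)"

definition rate_factor_formula :: "real set \<Rightarrow> (nat \<Rightarrow> real) \<Rightarrow> real \<Rightarrow> nat \<Rightarrow> real" where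
  "rate_factor_formula Lam h m K =
     (let s = sigma_star Lam h m K in
      if s \<le> 1 then sqrt m else sqrt m * (s + sqrt (s\<^sup>2 - 1)) powr (1 / real K))"

text \<open>Iterates of HB_K(h;m) on f(x) = 1/2 (x-xs)^T H (x-xs) + f_*, whose gradient is
  H (x - xs) (H symmetric).\<close>
fun hb_iter :: "(nat \<Rightarrow> real) \<Rightarrow> real \<Rightarrow> nat \<Rightarrow> real mat \<Rightarrow> real vec \<Rightarrow> real vec
                  \<Rightarrow> nat \<Rightarrow> real vec" where
  "hb_iter h m K H xs x0 0 = x0"
| "hb_iter h m K H xs x0 (Suc 0) = x0 - (h 0 / (1 + m)) \<cdot>\<^sub>v (H *\<^sub>v (x0 - xs))"
| "hb_iter h m K H xs x0 (Suc (Suc t)) =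
     hb_iter h m K H xs x0 (Suc t)
     - h (Suc t mod K) \<cdot>\<^sub>v (H *\<^sub>v (hb_iter h m K H xs x0 (Suc t) - xs))
     + m \<cdot>\<^sub>v (hb_iter h m K H xs x0 (Suc t) - hb_iter h m K H xs x0 t)"

definition vnorm :: "real vec \<Rightarrow> real" where
  "vnorm v = sqrt (v \<bullet> v)"

definition worst_rate :: "real set \<Rightarrow> (nat \<Rightarrow> real) \<Rightarrow> real \<Rightarrow> nat \<Rightarrow> nat \<Rightarrow> real" where
  "worst_rate Lam h m K t =
     Sup {vnorm (hb_iter h m K H xs x0 t - xs) / vnorm (x0 - xs) | d H xs x0.
            H \<in> carrier_mat d d \<and> transpose_mat H = H \<and>
            (\<forall>l. eigenvalue H l \<longrightarrow> l \<in> Lam) \<and>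
            xs \<in> carrier_vec d \<and> x0 \<in> carrier_vec d \<and> x0 \<noteq> xs}"

definition asymp_rate :: "real set \<Rightarrow> (nat \<Rightarrow> real) \<Rightarrow> real \<Rightarrow> nat \<Rightarrow> ereal" where
  "asymp_rate Lam h m K = limsup (\<lambda>t. ereal (worst_rate Lam h m K t powr (1 / real t)))"

text \<open>Residual polynomials: x_t - xs = P_t(H)(x0 - xs).\<close>
fun res_poly :: "(nat \<Rightarrow> real) \<Rightarrow> real \<Rightarrow> nat \<Rightarrow> nat \<Rightarrow> real poly" where
  "res_poly h m K 0 = 1"
| "res_poly h m K (Suc 0) = [:1, - h 0 / (1 + m):]"
| "res_poly h m K (Suc (Suc t)) =
     [:1 + m, - h (Suc t mod K):] * res_poly h m K (Suc t) - Polynomial.smult m (res_poly h m K t)"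

end

(* At lambda = 0 all factors of the link product coincide, so sigma(0; h, m) = (s^K + s^-K)/2 with
   s = sqrt m depends on m alone; matching sigma_K^Lambda(0) = s0 therefore forces s^K = a.
   Over one cycle of K steps the transfer matrix of the residual recurrence is s^K times a
   conjugate of the link product, so it has trace 2 a sigma(lambda) and determinant a^2, and
   Cayley-Hamilton gives the recurrence for P_nK. As |sigma| <= 1 on Lambda, the rescaled sequence
   P_nK / a^n is of Chebyshev type and grows at most linearly, while at a point where |sigma| = 1
   (which exists by optimality) it does not decay. The spectral theorem for symmetric matrices
   turns the worst case over quadratics into sup over Lambda of |P_t|, which yields the rates.
   For other parameters, the link polynomial q satisfies q(0) = (X + 1/X)/2 with X = sqrt(m')^K,
   and optimality of sigma_K^Lambda gives q(0) <= max 1 sigma_* s0; comparing x + 1/x on (0, 1]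
   turns this into the rate comparison. *)

theory Submission
  imports Defs "HOL-Real_Asymp.Real_Asymp"
begin

section \<open>Polynomials of a matrix applied to a vector\<close>

definition poly_mat_vec :: "'a::comm_ring_1 mat \<Rightarrow> 'a poly \<Rightarrow> 'a vec \<Rightarrow> 'a vec" where
  "poly_mat_vec A p v = fold_coeffs (\<lambda>c w. c \<cdot>\<^sub>v v + A *\<^sub>v w) p (0\<^sub>v (dim_vec v))"

context
  fixes A :: "'a::field mat" and n :: nat
  assumes A: "A \<in> carrier_mat n n"
begin

lemma mult_mat_vec_zero [simp]: "A *\<^sub>v 0\<^sub>v n = 0\<^sub>v n"
  using A by (intro eq_vecI) auto

lemma poly_mat_vec_0 [simp]: "poly_mat_vec A 0 v = 0\<^sub>v (dim_vec v)"
  by (simp add: poly_mat_vec_def)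

lemma poly_mat_vec_pCons:
  assumes v: "v \<in> carrier_vec n"
  shows "poly_mat_vec A (pCons c p) v = c \<cdot>\<^sub>v v + A *\<^sub>v poly_mat_vec A p v"
proof (cases "p = 0 \<and> c = 0")
  case True
  then show ?thesis using v A by (intro eq_vecI) (auto simp: poly_mat_vec_def)
qed (auto simp: poly_mat_vec_def)

lemma poly_mat_vec_carrier [simp]: "v \<in> carrier_vec n \<Longrightarrow> poly_mat_vec A p v \<in> carrier_vec n"
  by (induct p rule: pCons_induct) (use A in \<open>auto simp: poly_mat_vec_pCons\<close>)

lemma poly_mat_vec_zero_vec [simp]: "poly_mat_vec A p (0\<^sub>v n) = 0\<^sub>v n"
  by (induct p rule: pCons_induct) (auto simp: poly_mat_vec_pCons intro!: eq_vecI)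

lemma poly_mat_vec_dim [simp]: "v \<in> carrier_vec n \<Longrightarrow> dim_vec (poly_mat_vec A p v) = n"
  by (rule carrier_vecD[OF poly_mat_vec_carrier])

lemma poly_mat_vec_add_vec:
  assumes x: "x \<in> carrier_vec n" and y: "y \<in> carrier_vec n"
  shows "poly_mat_vec A p (x + y) = poly_mat_vec A p x + poly_mat_vec A p y"
proof (induct p rule: pCons_induct)
  case (pCons c p)
  then show ?case using x y A
    by (simp add: poly_mat_vec_pCons mult_add_distrib_mat_vec)
      (intro eq_vecI, auto simp: algebra_simps)
qed (use x y in \<open>auto intro!: eq_vecI\<close>)

lemma poly_mat_vec_smult_vec:
  assumes x: "x \<in> carrier_vec n"
  shows "poly_mat_vec A p (c \<cdot>\<^sub>v x) = c \<cdot>\<^sub>v poly_mat_vec A p x"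
proof (induct p rule: pCons_induct)
  case (pCons b p)
  then show ?case using x A
    by (simp add: poly_mat_vec_pCons mult_mat_vec)
      (intro eq_vecI, auto simp: algebra_simps)
qed (use x in \<open>auto intro!: eq_vecI\<close>)

lemma poly_mat_vec_add:
  assumes x: "x \<in> carrier_vec n"
  shows "poly_mat_vec A (p + q) x = poly_mat_vec A p x + poly_mat_vec A q x"
proof (induct p q rule: poly_induct2)
  case (pCons a p b q)
  then show ?case using x A
    by (simp add: poly_mat_vec_pCons mult_add_distrib_mat_vec)
      (intro eq_vecI, auto simp: algebra_simps)
qed (use x in \<open>auto intro!: eq_vecI\<close>)

lemma poly_mat_vec_smult:
  assumes x: "x \<in> carrier_vec n"
  shows "poly_mat_vec A (Polynomial.smult c p) x = c \<cdot>\<^sub>v poly_mat_vec A p x"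
proof (induct p rule: pCons_induct)
  case (pCons b p)
  then show ?case using x A
    by (simp add: poly_mat_vec_pCons mult_mat_vec)
      (intro eq_vecI, auto simp: algebra_simps)
qed (use x in \<open>auto intro!: eq_vecI\<close>)

lemma poly_mat_vec_diff:
  assumes x: "x \<in> carrier_vec n"
  shows "poly_mat_vec A (p - q) x = poly_mat_vec A p x - poly_mat_vec A q x"
proof -
  have "p - q = p + Polynomial.smult (-1) q" by simp
  then have "poly_mat_vec A (p - q) x = poly_mat_vec A p x + (-1) \<cdot>\<^sub>v poly_mat_vec A q x"
    by (simp only: poly_mat_vec_add[OF x] poly_mat_vec_smult[OF x])
  also have "\<dots> = poly_mat_vec A p x - poly_mat_vec A q x"
    using x by (intro eq_vecI) auto
  finally show ?thesis .
qed

lemma poly_mat_vec_mult_mat_vec: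
  "x \<in> carrier_vec n \<Longrightarrow> poly_mat_vec A p (A *\<^sub>v x) = A *\<^sub>v poly_mat_vec A p x"
proof (induct p rule: pCons_induct)
  case 0 then show ?case using A by (intro eq_vecI) auto
next
  case (pCons c p)
  then show ?case using A by (simp add: poly_mat_vec_pCons mult_add_distrib_mat_vec mult_mat_vec)
qed

lemma poly_mat_vec_mult:
  "x \<in> carrier_vec n \<Longrightarrow> poly_mat_vec A (p * q) x = poly_mat_vec A p (poly_mat_vec A q x)"
proof (induct p rule: pCons_induct)
  case (pCons c p)
  have "poly_mat_vec A (pCons c p * q) x = poly_mat_vec A (Polynomial.smult c q + pCons 0 (p * q)) x"
    by simp
  also have "\<dots> = c \<cdot>\<^sub>v poly_mat_vec A q x + A *\<^sub>v poly_mat_vec A (p * q) x"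
    using pCons A by (simp add: poly_mat_vec_add poly_mat_vec_smult poly_mat_vec_pCons)
      (intro eq_vecI, auto)
  finally show ?case using pCons by (simp add: poly_mat_vec_pCons)
qed (use A in auto)

lemma poly_mat_vec_const: "x \<in> carrier_vec n \<Longrightarrow> poly_mat_vec A [:c:] x = c \<cdot>\<^sub>v x"
  by (simp add: poly_mat_vec_pCons)

lemma poly_mat_vec_1: "x \<in> carrier_vec n \<Longrightarrow> poly_mat_vec A 1 x = x"
  using poly_mat_vec_const[of x 1] by (simp add: one_pCons)

lemma poly_mat_vec_linear:
  "x \<in> carrier_vec n \<Longrightarrow> poly_mat_vec A [:c, 1:] x = c \<cdot>\<^sub>v x + A *\<^sub>v x"
  by (simp add: poly_mat_vec_pCons poly_mat_vec_const)

lemma poly_mat_vec_sum_index: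
  assumes "x \<in> carrier_vec n" and "i < n"
  shows "poly_mat_vec A (\<Sum>j<(k::nat). f j) x $ i = (\<Sum>j<k. poly_mat_vec A (f j) x $ i)"
  by (induct k) (use assms in \<open>simp_all add: poly_mat_vec_add\<close>)

lemma poly_mat_vec_degree_0_eq_0:
  assumes x: "x \<in> carrier_vec n" and "g \<noteq> 0" and "degree g = 0"
    and annihilates: "poly_mat_vec A g x = 0\<^sub>v n"
  shows "x = 0\<^sub>v n"
proof -
  have "coeff g 0 \<noteq> 0" using assms(2,3) by (metis leading_coeff_0_iff)
  have "coeff g 0 \<cdot>\<^sub>v x = 0\<^sub>v n"
    using annihilates poly_mat_vec_const[OF x, of "coeff g 0"] degree_0_id[OF assms(3)] by simp
  have "x = (1 / coeff g 0) \<cdot>\<^sub>v (coeff g 0 \<cdot>\<^sub>v x)"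
    using \<open>coeff g 0 \<noteq> 0\<close> by (simp add: smult_smult_assoc)
  also have "\<dots> = 0\<^sub>v n"
    using \<open>coeff g 0 \<cdot>\<^sub>v x = 0\<^sub>v n\<close> by (auto intro!: eq_vecI)
  finally show ?thesis .
qed

lemma poly_mat_vec_eigenvector:
  assumes x: "x \<in> carrier_vec n" and eigen: "A *\<^sub>v x = l \<cdot>\<^sub>v x"
  shows "poly_mat_vec A p x = poly p l \<cdot>\<^sub>v x"
proof (induct p rule: pCons_induct)
  case (pCons c p)
  have "poly_mat_vec A (pCons c p) x = c \<cdot>\<^sub>v x + poly p l \<cdot>\<^sub>v (l \<cdot>\<^sub>v x)"
    using pCons x A by (simp add: poly_mat_vec_pCons mult_mat_vec eigen)
  also have "\<dots> = poly (pCons c p) l \<cdot>\<^sub>v x"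
    using x by (intro eq_vecI) (auto simp: algebra_simps)
  finally show ?case .
qed (use x in \<open>auto intro!: eq_vecI\<close>)

end

lemma exists_annihilating_poly:
  fixes A :: "'a::field mat"
  assumes A: "A \<in> carrier_mat n n" and v: "v \<in> carrier_vec n"
  shows "\<exists>g. g \<noteq> 0 \<and> poly_mat_vec A g v = 0\<^sub>v n"
proof -
  txt \<open>The columns of \<open>B\<close> are \<open>A\<^sup>j v\<close> for \<open>j \<le> n\<close>, padded by a zero row, so \<open>B\<close> is singular
    and a kernel vector yields the coefficients of \<open>g\<close>.\<close>
  define B where "B = mat (Suc n) (Suc n) (\<lambda>(i, j). if i < n then poly_mat_vec A (monom 1 j) v $ i else 0)"
  have B: "B \<in> carrier_mat (Suc n) (Suc n)" by (simp add: B_def)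
  have "det B = 0"
  proof -
    have "transpose_mat B *\<^sub>v unit_vec (Suc n) n = 0\<^sub>v (Suc n)"
      using B by (intro eq_vecI) (auto simp: scalar_prod_right_unit B_def)
    moreover have "unit_vec (Suc n) n \<noteq> (0\<^sub>v (Suc n) :: 'a vec)"
      by (metis index_unit_vec(1) index_zero_vec(1) lessI zero_neq_one)
    ultimately show ?thesis
      using det_0_iff_vec_prod_zero_field[of "transpose_mat B"] det_transpose[OF B] B
      by (metis transpose_carrier_mat unit_vec_carrier)
  qed
  then obtain c where c: "c \<in> carrier_vec (Suc n)" "c \<noteq> 0\<^sub>v (Suc n)" "B *\<^sub>v c = 0\<^sub>v (Suc n)"
    using det_0_iff_vec_prod_zero_field[OF B] by blast
  define g where "g = (\<Sum>j<Suc n. monom (c $ j) j)"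
  have coeff_g: "coeff g j = (if j < Suc n then c $ j else 0)" for j
    by (simp add: g_def coeff_sum coeff_monom)
  have "g \<noteq> 0"
  proof
    assume "g = 0"
    then have "c = 0\<^sub>v (Suc n)"
      using c(1) coeff_g by (intro eq_vecI) (auto, metis less_Suc_eq)
    with c(2) show False by simp
  qed
  moreover have "poly_mat_vec A g v = 0\<^sub>v n"
  proof (rule eq_vecI)
    fix i assume "i < dim_vec (0\<^sub>v n :: 'a vec)"
    then have i: "i < n" by simp
    have "poly_mat_vec A g v $ i = (\<Sum>j<Suc n. poly_mat_vec A (monom (c $ j) j) v $ i)"
      unfolding g_def using A v i by (rule poly_mat_vec_sum_index)
    also have "\<dots> = (\<Sum>j<Suc n. c $ j * poly_mat_vec A (monom 1 j) v $ i)"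
    proof (rule sum.cong)
      fix j
      have "monom (c $ j) j = Polynomial.smult (c $ j) (monom 1 j)" by (simp add: smult_monom)
      then show "poly_mat_vec A (monom (c $ j) j) v $ i = c $ j * poly_mat_vec A (monom 1 j) v $ i"
        using A v i by (simp add: poly_mat_vec_smult)
    qed simp
    also have "\<dots> = (B *\<^sub>v c) $ i"
      using i c(1) by (simp add: B_def scalar_prod_def row_def atLeast0LessThan mult.commute)
    finally show "poly_mat_vec A g v $ i = 0\<^sub>v n $ i"
      using c(3) i by simp
  qed (use A v in simp)
  ultimately show ?thesis by blast
qed

section \<open>Spectral decomposition of real symmetric matrices\<close>

lemma scalar_prod_self_nonneg: "0 \<le> (v :: real vec) \<bullet> v"
  using conjugate_square_ge_0_vec[of v] by simp

lemma scalar_prod_self_eq_0_iff: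
  "(v :: real vec) \<in> carrier_vec n \<Longrightarrow> v \<bullet> v = 0 \<longleftrightarrow> v = 0\<^sub>v n"
  using conjugate_square_eq_0_vec[of v n] by simp

lemma map_poly_of_real_mult:
  "map_poly complex_of_real (p * q) = map_poly of_real p * map_poly of_real q"
  by (induct p) (simp_all add: of_real_hom.map_poly_pCons_hom map_poly_smult of_real_hom.map_poly_hom_add)

lemma real_poly_degree_le_1_nonreal_root_eq_0:
  assumes "degree (r :: real poly) \<le> 1" and "poly (map_poly complex_of_real r) z = 0" and "Im z \<noteq> 0"
  shows "r = 0"
proof -
  have r: "r = [:coeff r 0, coeff r 1:]"
    using assms(1) by (intro poly_eqI) (auto simp: coeff_eq_0 coeff_pCons split: nat.split)
  have "poly (map_poly complex_of_real r) z = of_real (coeff r 0) + z * of_real (coeff r 1)"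
    by (subst r) (simp add: of_real_hom.map_poly_pCons_hom)
  then have "coeff r 1 = 0" "coeff r 0 = 0"
    using assms(2,3) by (auto simp: complex_eq_iff)
  then show ?thesis by (subst r) simp
qed

definition orthogonal_eigenpairs :: "real mat \<Rightarrow> nat \<Rightarrow> (real \<times> real vec) list \<Rightarrow> bool" where
  "orthogonal_eigenpairs H n ws \<longleftrightarrow>
     (\<forall>(l, w) \<in> set ws. w \<in> carrier_vec n \<and> H *\<^sub>v w = l \<cdot>\<^sub>v w) \<and>
     sorted_wrt (\<lambda>(_, u) (_, w). u \<bullet> w = 0) ws"

text \<open>\<open>\<Sum>\<^sub>i f(\<lambda>\<^sub>i) w\<^sub>i\<close>, folded from \<open>0\<^sub>v n\<close> since the generic zero vector has dimension 0.\<close>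
definition spectral_sum :: "nat \<Rightarrow> (real \<Rightarrow> real) \<Rightarrow> (real \<times> real vec) list \<Rightarrow> real vec" where
  "spectral_sum n f ws = foldr (\<lambda>(l, w) acc. f l \<cdot>\<^sub>v w + acc) ws (0\<^sub>v n)"

lemma spectral_sum_Nil [simp]: "spectral_sum n f [] = 0\<^sub>v n"
  by (simp add: spectral_sum_def)

lemma spectral_sum_Cons [simp]:
  "spectral_sum n f ((l, w) # ws) = f l \<cdot>\<^sub>v w + spectral_sum n f ws"
  by (simp add: spectral_sum_def)

lemma orthogonal_eigenpairs_Nil [simp]: "orthogonal_eigenpairs H n []"
  by (simp add: orthogonal_eigenpairs_def)

lemma orthogonal_eigenpairs_Cons [simp]:
  "orthogonal_eigenpairs H n ((l, w) # ws) \<longleftrightarrow>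
     w \<in> carrier_vec n \<and> H *\<^sub>v w = l \<cdot>\<^sub>v w \<and> (\<forall>(_, w') \<in> set ws. w \<bullet> w' = 0) \<and>
     orthogonal_eigenpairs H n ws"
  by (auto simp: orthogonal_eigenpairs_def)

lemma spectral_sum_carrier [simp]:
  "orthogonal_eigenpairs H n ws \<Longrightarrow> spectral_sum n f ws \<in> carrier_vec n"
  by (induct ws) auto

lemma scalar_prod_spectral_sum_eq_0:
  assumes "u \<in> carrier_vec n" and "orthogonal_eigenpairs H n ws" and "\<forall>(_, w) \<in> set ws. u \<bullet> w = 0"
  shows "u \<bullet> spectral_sum n f ws = 0"
  using assms by (induct ws) (auto simp: scalar_prod_add_distrib[of _ n])

lemma spectral_sum_scalar_prod_self:
  "orthogonal_eigenpairs H n ws \<Longrightarrow>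
     spectral_sum n f ws \<bullet> spectral_sum n f ws = (\<Sum>(l, w) \<leftarrow> ws. (f l)\<^sup>2 * (w \<bullet> w))"
proof (induct ws)
  case (Cons lw ws)
  obtain l w where lw: "lw = (l, w)" by fastforce
  let ?S = "spectral_sum n f ws"
  have w: "w \<in> carrier_vec n" and S: "?S \<in> carrier_vec n" and "w \<bullet> ?S = 0"
    using Cons.prems scalar_prod_spectral_sum_eq_0[of w n H ws] by (auto simp: lw)
  then have "?S \<bullet> w = 0" by (simp add: comm_scalar_prod[OF S w])
  with w S \<open>w \<bullet> ?S = 0\<close> Cons show ?case
    by (simp add: lw scalar_prod_add_distrib[of _ n] add_scalar_prod_distrib[of _ n] power2_eq_square)
qed simp

lemma poly_mat_vec_spectral_sum:
  assumes H: "H \<in> carrier_mat n n"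
  shows "orthogonal_eigenpairs H n ws \<Longrightarrow>
    poly_mat_vec H p (spectral_sum n f ws) = spectral_sum n (\<lambda>l. poly p l * f l) ws"
proof (induct ws)
  case (Cons lw ws)
  obtain l w where lw: "lw = (l, w)" by fastforce
  then have w: "w \<in> carrier_vec n" and "H *\<^sub>v w = l \<cdot>\<^sub>v w" using Cons.prems by auto
  then have "poly_mat_vec H p w = poly p l \<cdot>\<^sub>v w" by (rule poly_mat_vec_eigenvector[OF H])
  moreover have ws: "orthogonal_eigenpairs H n ws" using Cons.prems by (simp add: lw)
  ultimately show ?case
    using Cons.hyps w H
    by (simp add: lw poly_mat_vec_add_vec poly_mat_vec_smult_vec smult_smult_assoc mult.commute)
qed (use H in simp)

context
  fixes H :: "real mat" and n :: nat
  assumes H: "H \<in> carrier_mat n n" and symmetric: "transpose_mat H = H"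
begin

lemma scalar_prod_mult_mat_vec_symmetric:
  "x \<in> carrier_vec n \<Longrightarrow> y \<in> carrier_vec n \<Longrightarrow> x \<bullet> (H *\<^sub>v y) = (H *\<^sub>v x) \<bullet> y"
  using transpose_vec_mult_scalar[OF H, of y x] symmetric by simp

lemma scalar_prod_poly_mat_vec_symmetric:
  "x \<in> carrier_vec n \<Longrightarrow> y \<in> carrier_vec n \<Longrightarrow> x \<bullet> poly_mat_vec H p y = poly_mat_vec H p x \<bullet> y"
proof (induct p arbitrary: x rule: pCons_induct)
  case (pCons c p)
  have "x \<bullet> poly_mat_vec H (pCons c p) y = c * (x \<bullet> y) + x \<bullet> (H *\<^sub>v poly_mat_vec H p y)"
    using pCons H by (simp add: poly_mat_vec_pCons scalar_prod_add_distrib[of _ n])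
  also have "x \<bullet> (H *\<^sub>v poly_mat_vec H p y) = poly_mat_vec H p (H *\<^sub>v x) \<bullet> y"
    using pCons H by (simp add: scalar_prod_mult_mat_vec_symmetric)
  finally show ?case
    using pCons H by (simp add: poly_mat_vec_pCons poly_mat_vec_mult_mat_vec add_scalar_prod_distrib[of _ n])
qed (use H in simp)

lemma scalar_prod_eigenvector_poly_mat_vec:
  assumes u: "u \<in> carrier_vec n" and eigen: "H *\<^sub>v u = l \<cdot>\<^sub>v u" and x: "x \<in> carrier_vec n"
  shows "u \<bullet> poly_mat_vec H p x = poly p l * (u \<bullet> x)"
  using scalar_prod_poly_mat_vec_symmetric[OF u x] poly_mat_vec_eigenvector[OF H u eigen] u x
  by simp

text \<open>By symmetry, \<open>w \<bullet> q(H) w = \<parallel>(H - x) w\<parallel>\<^sup>2 + y\<^sup>2 \<parallel>w\<parallel>\<^sup>2\<close>.\<close>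
lemma quadratic_annihilator_eq_0:
  assumes w: "w \<in> carrier_vec n" and "y \<noteq> 0"
    and annihilates: "poly_mat_vec H [:x\<^sup>2 + y\<^sup>2, -2 * x, 1:] w = 0\<^sub>v n"
  shows "w = 0\<^sub>v n"
proof -
  define Hw where "Hw = H *\<^sub>v w"
  define u where "u = Hw + (-x) \<cdot>\<^sub>v w"
  have Hw: "Hw \<in> carrier_vec n" and u: "u \<in> carrier_vec n"
    using H w by (auto simp: Hw_def u_def)
  have "poly_mat_vec H [:x\<^sup>2 + y\<^sup>2, -2 * x, 1:] w = (x\<^sup>2 + y\<^sup>2) \<cdot>\<^sub>v w + ((-2 * x) \<cdot>\<^sub>v Hw + H *\<^sub>v Hw)"
    using H w by (simp add: poly_mat_vec_pCons poly_mat_vec_linear Hw_def mult_add_distrib_mat_vec mult_mat_vec)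
  then have "0 = w \<bullet> ((x\<^sup>2 + y\<^sup>2) \<cdot>\<^sub>v w + ((-2 * x) \<cdot>\<^sub>v Hw + H *\<^sub>v Hw))"
    using annihilates w by simp
  also have "\<dots> = (x\<^sup>2 + y\<^sup>2) * (w \<bullet> w) - 2 * x * (w \<bullet> Hw) + Hw \<bullet> Hw"
    using H w Hw by (simp add: scalar_prod_add_distrib[of _ n] scalar_prod_mult_mat_vec_symmetric Hw_def)
  also have "\<dots> = u \<bullet> u + y\<^sup>2 * (w \<bullet> w)"
    using w Hw unfolding u_def
    by (simp add: scalar_prod_add_distrib[of _ n] add_scalar_prod_distrib[of _ n]
        comm_scalar_prod[of Hw n w] power2_eq_square algebra_simps)
  finally have "y\<^sup>2 * (w \<bullet> w) = - (u \<bullet> u)" by linarith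
  then have "y\<^sup>2 * (w \<bullet> w) \<le> 0" using scalar_prod_self_nonneg[of u] by linarith
  moreover have "0 < y\<^sup>2" using \<open>y \<noteq> 0\<close> by simp
  ultimately have "w \<bullet> w \<le> 0" by (simp add: mult_le_0_iff)
  then have "w \<bullet> w = 0" using scalar_prod_self_nonneg[of w] by linarith
  then show ?thesis using w by (simp add: scalar_prod_self_eq_0_iff)
qed

lemma minimal_annihilator_has_real_root:
  assumes v: "v \<in> carrier_vec n" and "0 < degree g" and annihilates: "poly_mat_vec H g v = 0\<^sub>v n"
    and minimal: "\<And>g'. g' \<noteq> 0 \<Longrightarrow> degree g' < degree g \<Longrightarrow> poly_mat_vec H g' v \<noteq> 0\<^sub>v n"
  shows "\<exists>\<alpha>. poly g \<alpha> = 0"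
proof -
  have "\<not> constant (poly (map_poly complex_of_real g))"
    using \<open>0 < degree g\<close> by (simp add: constant_degree)
  then obtain z where z: "poly (map_poly complex_of_real g) z = 0"
    using fundamental_theorem_of_algebra by blast
  have "Im z = 0"
  proof (rule ccontr)
    assume "Im z \<noteq> 0"
    define q where "q = [:(Re z)\<^sup>2 + (Im z)\<^sup>2, -2 * Re z, 1:]"
    have "q \<noteq> 0" and degree_q: "degree q = 2" by (auto simp: q_def)
    have q_z: "poly (map_poly complex_of_real q) z = 0"
      by (simp add: q_def of_real_hom.map_poly_pCons_hom complex_eq_iff power2_eq_square algebra_simps)
    have "degree (g mod q) \<le> 1"
      using degree_mod_less[OF \<open>q \<noteq> 0\<close>, of g] degree_q by (cases "g mod q = 0") auto
    moreover have "map_poly complex_of_real g =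
        map_poly of_real (g div q) * map_poly of_real q + map_poly of_real (g mod q)"
      by (simp flip: map_poly_of_real_mult of_real_hom.map_poly_hom_add)
    then have "poly (map_poly complex_of_real (g mod q)) z = 0"
      using z q_z by simp
    ultimately have "g mod q = 0"
      using \<open>Im z \<noteq> 0\<close> by (rule real_poly_degree_le_1_nonreal_root_eq_0)
    then have g: "g = (g div q) * q" by (metis add.right_neutral div_mult_mod_eq)
    then have "g div q \<noteq> 0"
      using \<open>0 < degree g\<close> by (metis degree_0 less_irrefl mult_zero_left)
    moreover have "degree g = degree (g div q) + 2"
      using \<open>q \<noteq> 0\<close> \<open>g div q \<noteq> 0\<close> degree_q by (subst g) (simp add: degree_mult_eq)
    ultimately have "poly_mat_vec H (g div q) v \<noteq> 0\<^sub>v n" by (intro minimal) auto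
    moreover have "poly_mat_vec H q (poly_mat_vec H (g div q) v) = 0\<^sub>v n"
      using annihilates v H by (subst (asm) g) (simp add: poly_mat_vec_mult mult.commute)
    ultimately show False
      using quadratic_annihilator_eq_0[OF poly_mat_vec_carrier[OF H v] \<open>Im z \<noteq> 0\<close>] by (simp add: q_def)
  qed
  then have "z = of_real (Re z)" by (simp add: complex_eq_iff)
  then have "of_real (poly g (Re z)) = (0 :: complex)"
    using z by (metis of_real_hom.poly_map_poly)
  then show ?thesis by auto
qed

lemma eigenvector_of_minimal_annihilator:
  assumes v: "v \<in> carrier_vec n" and "0 < degree g" and annihilates: "poly_mat_vec H g v = 0\<^sub>v n"
    and minimal: "\<And>g'. g' \<noteq> 0 \<Longrightarrow> degree g' < degree g \<Longrightarrow> poly_mat_vec H g' v \<noteq> 0\<^sub>v n"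
  obtains \<alpha> f where "f \<noteq> 0" and "degree f < degree g" and "poly_mat_vec H f v \<noteq> 0\<^sub>v n"
    and "H *\<^sub>v poly_mat_vec H f v = \<alpha> \<cdot>\<^sub>v poly_mat_vec H f v"
proof -
  obtain \<alpha> where "poly g \<alpha> = 0"
    using minimal_annihilator_has_real_root[OF v \<open>0 < degree g\<close> annihilates minimal] by blast
  then obtain f where g: "g = [:-\<alpha>, 1:] * f" by (metis dvdE poly_eq_0_iff_dvd)
  then have "f \<noteq> 0" using \<open>0 < degree g\<close> by auto
  have "degree g = degree f + 1"
    using \<open>f \<noteq> 0\<close> unfolding g by (subst degree_mult_eq) auto
  then have "degree f < degree g" by simp
  define u where "u = poly_mat_vec H f v"
  have "u \<noteq> 0\<^sub>v n" unfolding u_def by (rule minimal[OF \<open>f \<noteq> 0\<close> \<open>degree f < degree g\<close>])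
  have u: "u \<in> carrier_vec n" using H v by (simp add: u_def)
  have "poly_mat_vec H [:-\<alpha>, 1:] u = 0\<^sub>v n"
    using annihilates unfolding g u_def by (simp only: poly_mat_vec_mult[OF H v])
  then have sum_0: "(-\<alpha>) \<cdot>\<^sub>v u + H *\<^sub>v u = 0\<^sub>v n"
    using u by (simp add: poly_mat_vec_linear[OF H])
  have "H *\<^sub>v u = \<alpha> \<cdot>\<^sub>v u"
  proof (rule eq_vecI)
    fix i assume "i < dim_vec (\<alpha> \<cdot>\<^sub>v u)"
    then have "i < n" using u by simp
    then have "((-\<alpha>) \<cdot>\<^sub>v u + H *\<^sub>v u) $ i = 0" by (simp add: sum_0)
    then show "(H *\<^sub>v u) $ i = (\<alpha> \<cdot>\<^sub>v u) $ i"
      using \<open>i < n\<close> u H by simp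
  qed (use u H in simp)
  then show ?thesis
    using that[OF \<open>f \<noteq> 0\<close> \<open>degree f < degree g\<close>] \<open>u \<noteq> 0\<^sub>v n\<close> by (simp add: u_def)
qed

text \<open>The remainder is \<open>r(H) v\<close> with \<open>r = 1 - c f\<close> and \<open>c f(\<alpha>) = 1\<close>, so
  \<open>f(H) r(H) v = r(H) u = r(\<alpha>) u = 0\<close>.\<close>
lemma eigenvector_orthogonal_split:
  assumes v: "v \<in> carrier_vec n" and u: "u = poly_mat_vec H f v" and "u \<noteq> 0\<^sub>v n"
    and eigen: "H *\<^sub>v u = \<alpha> \<cdot>\<^sub>v u"
  obtains c r where "v = c \<cdot>\<^sub>v u + poly_mat_vec H r v"
    and "poly_mat_vec H f (poly_mat_vec H r v) = 0\<^sub>v n" and "u \<bullet> poly_mat_vec H r v = 0"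
proof -
  have u_carrier: "u \<in> carrier_vec n" using H v by (simp add: u)
  have "u \<bullet> u = poly f \<alpha> * (u \<bullet> v)"
    using scalar_prod_eigenvector_poly_mat_vec[OF u_carrier eigen v] by (simp add: u)
  moreover have "u \<bullet> u \<noteq> 0" using u_carrier \<open>u \<noteq> 0\<^sub>v n\<close> by (simp add: scalar_prod_self_eq_0_iff)
  moreover define c where "c = (u \<bullet> v) / (u \<bullet> u)"
  ultimately have "c * poly f \<alpha> = 1" by simp
  define r where "r = 1 + Polynomial.smult (- c) f"
  have r_root: "poly r \<alpha> = 0" using \<open>c * poly f \<alpha> = 1\<close> by (simp add: r_def)
  have "poly_mat_vec H r v = v + (- c) \<cdot>\<^sub>v u"
    by (simp only: r_def u poly_mat_vec_add[OF H v] poly_mat_vec_smult[OF H v] poly_mat_vec_1[OF H v])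
  then have split: "v = c \<cdot>\<^sub>v u + poly_mat_vec H r v"
    using v u_carrier by (intro eq_vecI) auto
  have "poly_mat_vec H f (poly_mat_vec H r v) = poly_mat_vec H r u"
    using H v by (simp add: u flip: poly_mat_vec_mult) (simp add: mult.commute)
  then have annihilated: "poly_mat_vec H f (poly_mat_vec H r v) = 0\<^sub>v n"
    using r_root u_carrier
    by (auto simp: poly_mat_vec_eigenvector[OF H u_carrier eigen] intro!: eq_vecI)
  have "u \<bullet> poly_mat_vec H r v = 0"
    using r_root by (simp add: scalar_prod_eigenvector_poly_mat_vec[OF u_carrier eigen v])
  with split annihilated show ?thesis by (rule that)
qed

lemma spectral_decomposition_cyclic:
  assumes "v \<in> carrier_vec n" and "g \<noteq> 0" and "poly_mat_vec H g v = 0\<^sub>v n"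
  shows "\<exists>ws. orthogonal_eigenpairs H n ws \<and> spectral_sum n (\<lambda>_. 1) ws = v \<and>
      (\<forall>(_, w) \<in> set ws. \<exists>p. w = poly_mat_vec H p v)"
  using assms
proof (induction "degree g" arbitrary: g v rule: less_induct)
  case less
  note v = \<open>v \<in> carrier_vec n\<close>
  show ?case
  proof (cases "\<exists>g'. g' \<noteq> 0 \<and> degree g' < degree g \<and> poly_mat_vec H g' v = 0\<^sub>v n")
    case True
    then obtain g' where "g' \<noteq> 0" "degree g' < degree g" "poly_mat_vec H g' v = 0\<^sub>v n" by blast
    then show ?thesis using less.hyps[OF \<open>degree g' < degree g\<close> v] by blast
  next
    case False
    then have minimal: "\<And>g'. g' \<noteq> 0 \<Longrightarrow> degree g' < degree g \<Longrightarrow> poly_mat_vec H g' v \<noteq> 0\<^sub>v n"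
      by blast
    show ?thesis
    proof (cases "degree g = 0")
      case True
      then have "v = 0\<^sub>v n" using poly_mat_vec_degree_0_eq_0[OF H v] less.prems by blast
      then show ?thesis by (intro exI[of _ "[]"]) simp
    next
      case False
      then have "0 < degree g" by simp
      obtain \<alpha> f where f: "f \<noteq> 0" "degree f < degree g"
        and "poly_mat_vec H f v \<noteq> 0\<^sub>v n" and eigen: "H *\<^sub>v poly_mat_vec H f v = \<alpha> \<cdot>\<^sub>v poly_mat_vec H f v"
        by (rule eigenvector_of_minimal_annihilator[OF v \<open>0 < degree g\<close> less.prems(3) minimal])
      define u where "u = poly_mat_vec H f v"
      have u: "u \<in> carrier_vec n" using H v by (simp add: u_def)
      obtain c r where split: "v = c \<cdot>\<^sub>v u + poly_mat_vec H r v"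
        and annihilated: "poly_mat_vec H f (poly_mat_vec H r v) = 0\<^sub>v n"
        and orthogonal: "u \<bullet> poly_mat_vec H r v = 0"
        using eigenvector_orthogonal_split[OF v u_def] \<open>poly_mat_vec H f v \<noteq> 0\<^sub>v n\<close> eigen
        unfolding u_def by metis
      define v' where "v' = poly_mat_vec H r v"
      have v': "v' \<in> carrier_vec n" using H v by (simp add: v'_def)
      obtain ws' where ws': "orthogonal_eigenpairs H n ws'" "spectral_sum n (\<lambda>_. 1) ws' = v'"
        and ws'_poly: "\<forall>(_, w) \<in> set ws'. \<exists>p. w = poly_mat_vec H p v'"
        using less.hyps[OF f(2) v' f(1) annihilated[folded v'_def]] by blast
      have orthogonal_ws': "(c \<cdot>\<^sub>v u) \<bullet> w = 0" and poly_ws': "\<exists>p. w = poly_mat_vec H p v"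
        if lw: "(l, w) \<in> set ws'" for l w
      proof -
        obtain p where w: "w = poly_mat_vec H p v'" using ws'_poly lw by fastforce
        have "u \<bullet> w = poly p \<alpha> * (u \<bullet> v')"
          unfolding w using scalar_prod_eigenvector_poly_mat_vec[OF u eigen[folded u_def] v'] .
        then show "(c \<cdot>\<^sub>v u) \<bullet> w = 0"
          using u v' H orthogonal by (simp add: w v'_def)
        show "\<exists>p. w = poly_mat_vec H p v"
          using H v by (intro exI[of _ "p * r"]) (simp add: w v'_def poly_mat_vec_mult)
      qed
      have "H *\<^sub>v (c \<cdot>\<^sub>v u) = \<alpha> \<cdot>\<^sub>v (c \<cdot>\<^sub>v u)"
        using H u eigen by (simp add: u_def mult_mat_vec smult_smult_assoc mult.commute)
      moreover have "c \<cdot>\<^sub>v u = poly_mat_vec H (Polynomial.smult c f) v"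
        using H v by (simp add: u_def poly_mat_vec_smult)
      ultimately show ?thesis
        using ws' split u orthogonal_ws' poly_ws' H v
        by (intro exI[of _ "(\<alpha>, c \<cdot>\<^sub>v u) # ws'"]) (auto simp: v'_def)
    qed
  qed
qed

lemma spectral_decomposition:
  "v \<in> carrier_vec n \<Longrightarrow> \<exists>ws. orthogonal_eigenpairs H n ws \<and> spectral_sum n (\<lambda>_. 1) ws = v"
  using exists_annihilating_poly[OF H] spectral_decomposition_cyclic by blast

lemma vnorm_poly_mat_vec_le:
  assumes v: "v \<in> carrier_vec n" and "0 \<le> B"
    and bound: "\<And>l. eigenvalue H l \<Longrightarrow> \<bar>poly p l\<bar> \<le> B"
  shows "vnorm (poly_mat_vec H p v) \<le> B * vnorm v"
proof -
  obtain ws where ws: "orthogonal_eigenpairs H n ws" and v_eq: "spectral_sum n (\<lambda>_. 1) ws = v"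
    using spectral_decomposition[OF v] by blast
  have "poly_mat_vec H p v \<bullet> poly_mat_vec H p v = (\<Sum>(l, w) \<leftarrow> ws. (poly p l)\<^sup>2 * (w \<bullet> w))"
    using spectral_sum_scalar_prod_self[OF ws]
    by (simp add: v_eq[symmetric] poly_mat_vec_spectral_sum[OF H ws])
  also have "\<dots> \<le> (\<Sum>(l, w) \<leftarrow> ws. B\<^sup>2 * (w \<bullet> w))"
  proof (rule sum_list_mono, clarify)
    fix l w assume "(l, w) \<in> set ws"
    then have "w \<in> carrier_vec n" "H *\<^sub>v w = l \<cdot>\<^sub>v w"
      using ws by (auto simp: orthogonal_eigenpairs_def)
    then have "w \<noteq> 0\<^sub>v n \<Longrightarrow> \<bar>poly p l\<bar> \<le> B"
      using bound carrier_matD[OF H] by (auto simp: eigenvalue_def eigenvector_def)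
    then have "w \<noteq> 0\<^sub>v n \<Longrightarrow> (poly p l)\<^sup>2 \<le> B\<^sup>2"
      by (metis abs_ge_zero power2_abs power_mono)
    then show "(poly p l)\<^sup>2 * (w \<bullet> w) \<le> B\<^sup>2 * (w \<bullet> w)"
      by (cases "w = 0\<^sub>v n") (auto intro: mult_right_mono scalar_prod_self_nonneg)
  qed
  also have "\<dots> = B\<^sup>2 * (v \<bullet> v)"
    using spectral_sum_scalar_prod_self[OF ws, of "\<lambda>_. 1"]
    by (simp add: v_eq split_def sum_list_const_mult)
  finally have "vnorm (poly_mat_vec H p v) \<le> sqrt (B\<^sup>2 * (v \<bullet> v))"
    unfolding vnorm_def by (rule real_sqrt_le_mono)
  then show ?thesis
    using \<open>0 \<le> B\<close> by (simp add: vnorm_def real_sqrt_mult)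
qed

end

section \<open>Worst-case rates through residual polynomials\<close>

lemma vnorm_smult: "vnorm (c \<cdot>\<^sub>v v) = \<bar>c\<bar> * vnorm v"
proof -
  have "(c \<cdot>\<^sub>v v) \<bullet> (c \<cdot>\<^sub>v v) = c\<^sup>2 * (v \<bullet> v)" by (simp add: power2_eq_square)
  then show ?thesis by (simp add: vnorm_def real_sqrt_mult)
qed

lemma vnorm_pos: "v \<in> carrier_vec n \<Longrightarrow> v \<noteq> 0\<^sub>v n \<Longrightarrow> 0 < vnorm v"
  using scalar_prod_self_nonneg[of v] scalar_prod_self_eq_0_iff[of v n]
  by (simp add: vnorm_def order_less_le)

lemma hb_iter_carrier:
  assumes "H \<in> carrier_mat n n" and "xs \<in> carrier_vec n" and "x0 \<in> carrier_vec n"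
  shows "hb_iter h m K H xs x0 t \<in> carrier_vec n"
  using assms by (induction h m K H xs x0 t rule: hb_iter.induct) auto

lemma hb_iter_eq_res_poly:
  assumes H: "H \<in> carrier_mat n n" and xs: "xs \<in> carrier_vec n" and x0: "x0 \<in> carrier_vec n"
  shows "hb_iter h m K H xs x0 t - xs = poly_mat_vec H (res_poly h m K t) (x0 - xs)"
  using assms
proof (induction h m K H xs x0 t rule: hb_iter.induct)
  case (1 h m K H xs x0)
  then show ?case by (simp add: poly_mat_vec_1)
next
  case (2 h m K H xs x0)
  then have "x0 - xs \<in> carrier_vec n" by simp
  with 2 show ?case
    by (simp add: poly_mat_vec_pCons poly_mat_vec_const mult_mat_vec) (intro eq_vecI, auto)
next
  case (3 h m K H xs x0 t)
  note H = "3.prems"(1) and xs = "3.prems"(2) and x0 = "3.prems"(3)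
  let ?x = "hb_iter h m K H xs x0" and ?e = "x0 - xs" and ?c = "- h (Suc t mod K)"
  define a where "a = poly_mat_vec H (res_poly h m K (Suc t)) ?e"
  define b where "b = poly_mat_vec H (res_poly h m K t) ?e"
  have e: "?e \<in> carrier_vec n" using xs x0 by simp
  then have a: "a \<in> carrier_vec n" and b: "b \<in> carrier_vec n"
    using H by (simp_all add: a_def b_def)
  have x_carrier: "?x s \<in> carrier_vec n" for s using H xs x0 by (rule hb_iter_carrier)
  then have x_dim: "dim_vec (?x s) = n" for s by (rule carrier_vecD)
  have "res_poly h m K (Suc (Suc t)) =
      [:1 + m, ?c:] * res_poly h m K (Suc t) - Polynomial.smult m (res_poly h m K t)"
    by simp
  then have "poly_mat_vec H (res_poly h m K (Suc (Suc t))) ?e =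
      ((1 + m) \<cdot>\<^sub>v a + H *\<^sub>v (?c \<cdot>\<^sub>v a)) - m \<cdot>\<^sub>v b"
    by (simp only: poly_mat_vec_diff[OF H e] poly_mat_vec_mult[OF H e] poly_mat_vec_smult[OF H e]
        poly_mat_vec_pCons[OF H a] a_def[symmetric] b_def[symmetric]) (use H a in simp)
  moreover have "?x (Suc (Suc t)) - xs = ((1 + m) \<cdot>\<^sub>v a + H *\<^sub>v (?c \<cdot>\<^sub>v a)) - m \<cdot>\<^sub>v b"
  proof (rule eq_vecI)
    fix i assume "i < dim_vec (((1 + m) \<cdot>\<^sub>v a + H *\<^sub>v (?c \<cdot>\<^sub>v a)) - m \<cdot>\<^sub>v b)"
    then have i: "i < n" using b by simp
    have "(?x (Suc t) - xs) $ i = a $ i" and "(?x t - xs) $ i = b $ i"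
      using 3 by (simp_all add: a_def b_def)
    then have "?x (Suc t) $ i = xs $ i + a $ i" and "?x t $ i = xs $ i + b $ i"
      using i xs x_carrier by simp_all
    moreover have "?x (Suc t) - xs = a" using 3 by (simp add: a_def)
    ultimately show "(?x (Suc (Suc t)) - xs) $ i =
        (((1 + m) \<cdot>\<^sub>v a + H *\<^sub>v (?c \<cdot>\<^sub>v a)) - m \<cdot>\<^sub>v b) $ i"
      using i a b xs H x_dim by (simp add: mult_mat_vec algebra_simps)
  qed (use b x_carrier xs in simp)
  ultimately show ?case by simp
qed

definition rate_ratios :: "real set \<Rightarrow> (nat \<Rightarrow> real) \<Rightarrow> real \<Rightarrow> nat \<Rightarrow> nat \<Rightarrow> real set" where
  "rate_ratios Lam h m K t =
     {vnorm (hb_iter h m K H xs x0 t - xs) / vnorm (x0 - xs) | d H xs x0.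
        H \<in> carrier_mat d d \<and> transpose_mat H = H \<and> (\<forall>l. eigenvalue H l \<longrightarrow> l \<in> Lam) \<and>
        xs \<in> carrier_vec d \<and> x0 \<in> carrier_vec d \<and> x0 \<noteq> xs}"

lemma worst_rate_eq_Sup: "worst_rate Lam h m K t = Sup (rate_ratios Lam h m K t)"
  by (simp add: worst_rate_def rate_ratios_def)

lemma rate_ratio_le:
  assumes "r \<in> rate_ratios Lam h m K t" and "0 \<le> B"
    and bound: "\<forall>l\<in>Lam. \<bar>poly (res_poly h m K t) l\<bar> \<le> B"
  shows "r \<le> B"
proof -
  obtain d H xs x0 where r: "r = vnorm (hb_iter h m K H xs x0 t - xs) / vnorm (x0 - xs)"
    and H: "H \<in> carrier_mat d d" "transpose_mat H = H" "\<forall>l. eigenvalue H l \<longrightarrow> l \<in> Lam"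
    and xs: "xs \<in> carrier_vec d" and x0: "x0 \<in> carrier_vec d" and "x0 \<noteq> xs"
    using assms(1) by (auto simp: rate_ratios_def)
  have "x0 - xs \<noteq> 0\<^sub>v d"
  proof
    assume "x0 - xs = 0\<^sub>v d"
    have "x0 $ i = xs $ i" if "i < d" for i
    proof -
      have "(x0 - xs) $ i = 0" using \<open>x0 - xs = 0\<^sub>v d\<close> that by simp
      then show ?thesis using that xs by simp
    qed
    then have "x0 = xs" using xs x0 by (intro eq_vecI) auto
    with \<open>x0 \<noteq> xs\<close> show False ..
  qed
  then have "0 < vnorm (x0 - xs)" using xs x0 by (intro vnorm_pos) auto
  moreover have "vnorm (hb_iter h m K H xs x0 t - xs) \<le> B * vnorm (x0 - xs)"
    unfolding hb_iter_eq_res_poly[OF H(1) xs x0]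
    using H bound xs x0 \<open>0 \<le> B\<close> by (intro vnorm_poly_mat_vec_le) auto
  ultimately show ?thesis by (simp add: r pos_divide_le_eq)
qed

lemma abs_res_poly_mem_rate_ratios:
  assumes "l \<in> Lam"
  shows "\<bar>poly (res_poly h m K t) l\<bar> \<in> rate_ratios Lam h m K t"
proof -
  define H :: "real mat" where "H = mat 1 1 (\<lambda>_. l)"
  define x0 :: "real vec" where "x0 = unit_vec 1 0"
  have H: "H \<in> carrier_mat 1 1" and "transpose_mat H = H"
    by (auto simp: H_def intro!: eq_matI)
  have x0: "x0 \<in> carrier_vec 1" by (simp add: x0_def)
  have eigen: "H *\<^sub>v v = l \<cdot>\<^sub>v v" if "v \<in> carrier_vec 1" for v
    using that by (intro eq_vecI) (auto simp: H_def scalar_prod_def)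
  have "\<forall>l'. eigenvalue H l' \<longrightarrow> l' \<in> Lam"
  proof (intro allI impI)
    fix l' assume ev: "eigenvalue H l'"
    obtain v where v: "v \<in> carrier_vec 1" "v \<noteq> 0\<^sub>v 1" "H *\<^sub>v v = l' \<cdot>\<^sub>v v"
      using ev carrier_matD[OF H] unfolding eigenvalue_def eigenvector_def by auto
    then have "v $ 0 \<noteq> 0" by (metis eq_vecI carrier_vecD index_zero_vec less_one)
    moreover have "(l \<cdot>\<^sub>v v) $ 0 = (l' \<cdot>\<^sub>v v) $ 0" using v eigen by simp
    ultimately show "l' \<in> Lam" using v \<open>l \<in> Lam\<close> by auto
  qed
  moreover have "x0 \<noteq> 0\<^sub>v 1"
  proof
    assume "x0 = 0\<^sub>v 1"
    then have "x0 $ 0 = 0" by simp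
    then show False by (simp add: x0_def)
  qed
  moreover have "vnorm (x0 - 0\<^sub>v 1) = 1" by (simp add: x0_def vnorm_def)
  moreover have "hb_iter h m K H (0\<^sub>v 1) x0 t - 0\<^sub>v 1 = poly (res_poly h m K t) l \<cdot>\<^sub>v x0"
    using hb_iter_eq_res_poly[OF H _ x0] poly_mat_vec_eigenvector[OF H _ eigen] x0 by simp
  ultimately have ratio: "\<bar>poly (res_poly h m K t) l\<bar> =
      vnorm (hb_iter h m K H (0\<^sub>v 1) x0 t - 0\<^sub>v 1) / vnorm (x0 - 0\<^sub>v 1)"
    using x0 by (simp add: vnorm_smult)
  show ?thesis
    unfolding rate_ratios_def mem_Collect_eq
    by (rule exI[of _ 1], rule exI[of _ H], rule exI[of _ "0\<^sub>v 1"], rule exI[of _ x0])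
      (use ratio H \<open>transpose_mat H = H\<close> x0 \<open>\<forall>l'. eigenvalue H l' \<longrightarrow> l' \<in> Lam\<close> \<open>x0 \<noteq> 0\<^sub>v 1\<close> in simp)
qed

lemma worst_rate_le:
  assumes "Lam \<noteq> {}" and bound: "\<forall>l\<in>Lam. \<bar>poly (res_poly h m K t) l\<bar> \<le> B"
  shows "worst_rate Lam h m K t \<le> B"
proof -
  obtain l where "l \<in> Lam" using assms(1) by blast
  then have "0 \<le> B" using bound by force
  show ?thesis
    unfolding worst_rate_eq_Sup
    using abs_res_poly_mem_rate_ratios[OF \<open>l \<in> Lam\<close>, of h m K t] rate_ratio_le[OF _ \<open>0 \<le> B\<close> bound]
    by (intro cSup_least) auto
qed

lemma abs_res_poly_le_worst_rate:
  assumes "l \<in> Lam" and bound: "\<forall>l\<in>Lam. \<bar>poly (res_poly h m K t) l\<bar> \<le> B"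
  shows "\<bar>poly (res_poly h m K t) l\<bar> \<le> worst_rate Lam h m K t"
proof -
  have "0 \<le> B" using assms by force
  then have "bdd_above (rate_ratios Lam h m K t)"
    using rate_ratio_le[OF _ _ bound] by (intro bdd_aboveI) auto
  then show ?thesis
    unfolding worst_rate_eq_Sup by (rule cSup_upper[OF abs_res_poly_mem_rate_ratios[OF \<open>l \<in> Lam\<close>]])
qed

section \<open>Link products and transfer matrices\<close>

text \<open>\<open>2 \<times> 2\<close> matrices \<open>(a, b, c, d)\<close> stand for \<open>[[a, b], [c, d]]\<close>; pairs are column vectors.\<close>
type_synonym 'a mat2 = "'a \<times> 'a \<times> 'a \<times> 'a"

fun mat2_mult :: "'a::comm_ring_1 mat2 \<Rightarrow> 'a mat2 \<Rightarrow> 'a mat2" where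
  "mat2_mult (a, b, c, d) (e, f, g, k) = (a * e + b * g, a * f + b * k, c * e + d * g, c * f + d * k)"

fun mat2_trace :: "'a::comm_ring_1 mat2 \<Rightarrow> 'a" where
  "mat2_trace (a, b, c, d) = a + d"

fun mat2_det :: "'a::comm_ring_1 mat2 \<Rightarrow> 'a" where
  "mat2_det (a, b, c, d) = a * d - b * c"

fun mat2_apply :: "'a::comm_ring_1 mat2 \<Rightarrow> 'a \<times> 'a \<Rightarrow> 'a \<times> 'a" where
  "mat2_apply (a, b, c, d) (u, v) = (a * u + b * v, c * u + d * v)"

definition mat2_one :: "'a::comm_ring_1 mat2" where
  "mat2_one = (1, 0, 0, 1)"

lemma mat2_det_mult: "mat2_det (mat2_mult X Y) = mat2_det X * mat2_det Y"
  by (cases X; cases Y) (simp add: algebra_simps)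

lemma mat2_apply_mult: "mat2_apply (mat2_mult X Y) w = mat2_apply X (mat2_apply Y w)"
  by (cases X; cases Y; cases w) (simp add: algebra_simps)

lemma mat2_apply_one [simp]: "mat2_apply mat2_one w = w"
  by (cases w) (simp add: mat2_one_def)

lemma mat2_apply_cayley_hamilton:
  "mat2_apply X (mat2_apply X w) =
     (mat2_trace X * fst (mat2_apply X w) - mat2_det X * fst w,
      mat2_trace X * snd (mat2_apply X w) - mat2_det X * snd w)"
  by (cases X; cases w) (simp add: algebra_simps)

lemma mat2_trace_cayley_hamilton:
  "mat2_trace (mat2_mult X (mat2_mult X Y)) =
     mat2_trace X * mat2_trace (mat2_mult X Y) - mat2_det X * mat2_trace Y"
  by (cases X; cases Y) (simp add: algebra_simps)

definition mat2_of_mat :: "'a::comm_ring_1 mat \<Rightarrow> 'a mat2" where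
  "mat2_of_mat A = (A $$ (0, 0), A $$ (0, 1), A $$ (1, 0), A $$ (1, 1))"

lemma mat2_of_mat_mult:
  assumes "A \<in> carrier_mat 2 2" and "B \<in> carrier_mat 2 2"
  shows "mat2_of_mat (A * B) = mat2_mult (mat2_of_mat A) (mat2_of_mat B)"
proof -
  have sum_2: "(\<Sum>k\<in>{0..<2}. f k) = f 0 + f 1" for f :: "nat \<Rightarrow> 'a"
    by (simp add: numeral_2_eq_2)
  show ?thesis using assms by (simp add: mat2_of_mat_def scalar_prod_def sum_2 del: One_nat_def)
qed

definition link_step :: "(nat \<Rightarrow> real) \<Rightarrow> real \<Rightarrow> real \<Rightarrow> nat \<Rightarrow> real mat2" where
  "link_step h m lam i = ((1 + m - h i * lam) / sqrt m, -1, 1, 0)"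

text \<open>Since \<open>M\<^sub>i\<close> carries the step size \<open>h\<^sub>K\<^sub>-\<^sub>i\<close>, the paper's product \<open>M\<^sub>1 \<cdots> M\<^sub>K\<close> is
  \<open>link_prod h m lam K\<close>.\<close>
fun link_prod :: "(nat \<Rightarrow> real) \<Rightarrow> real \<Rightarrow> real \<Rightarrow> nat \<Rightarrow> real mat2" where
  "link_prod h m lam 0 = mat2_one"
| "link_prod h m lam (Suc j) = mat2_mult (link_step h m lam j) (link_prod h m lam j)"

lemma mat2_of_mat_link_product:
  assumes "j \<le> K"
  shows "foldr (\<lambda>i A. link_mat h m K lam i * A) [K + 1 - j..<K + 1] (1\<^sub>m 2) \<in> carrier_mat 2 2 \<and>
    mat2_of_mat (foldr (\<lambda>i A. link_mat h m K lam i * A) [K + 1 - j..<K + 1] (1\<^sub>m 2)) =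
      link_prod h m lam j"
  using assms
proof (induct j)
  case 0
  then show ?case by (simp add: mat2_of_mat_def mat2_one_def)
next
  case (Suc j)
  have "K + 1 - Suc j = K - j" and "Suc (K - j) = K + 1 - j" using Suc.prems by auto
  then have range: "[K + 1 - Suc j..<K + 1] = (K - j) # [K + 1 - j..<K + 1]"
    by (metis less_Suc_eq_le upt_conv_Cons add.commute plus_1_eq_Suc diff_le_self)
  have "length [x, y] = 2" for x y :: 'a by simp
  then have "link_mat h m K lam (K - j) \<in> carrier_mat 2 2"
    unfolding link_mat_def mat_of_rows_list_def by (metis mat_carrier)
  moreover have "mat2_of_mat (link_mat h m K lam (K - j)) = link_step h m lam j"
    using Suc.prems
    by (simp add: link_mat_def mat_of_rows_list_def mat2_of_mat_def link_step_def del: One_nat_def)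
  ultimately show ?case
    using Suc by (simp only: range foldr_Cons o_apply) (simp add: mat2_of_mat_mult del: One_nat_def)
qed

lemma link_sigma_eq_trace: "link_sigma h m K lam = mat2_trace (link_prod h m lam K) / 2"
proof -
  have "mat2_of_mat (foldr (\<lambda>i A. link_mat h m K lam i * A) [1..<K + 1] (1\<^sub>m 2)) = link_prod h m lam K"
    using mat2_of_mat_link_product[of K K h m lam] by simp
  then show ?thesis
    unfolding link_sigma_def trace2_def
    by (cases "link_prod h m lam K") (simp add: mat2_of_mat_def del: One_nat_def)
qed

fun mat2_poly_eval :: "real poly mat2 \<Rightarrow> real \<Rightarrow> real mat2" where
  "mat2_poly_eval (a, b, c, d) x = (poly a x, poly b x, poly c x, poly d x)"

fun mat2_degree_le :: "real poly mat2 \<Rightarrow> nat \<Rightarrow> bool" where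
  "mat2_degree_le (a, b, c, d) n \<longleftrightarrow> degree a \<le> n \<and> degree b \<le> n \<and> degree c \<le> n \<and> degree d \<le> n"

lemma mat2_poly_eval_mult:
  "mat2_poly_eval (mat2_mult X Y) x = mat2_mult (mat2_poly_eval X x) (mat2_poly_eval Y x)"
  by (cases X; cases Y) simp

fun link_prod_poly :: "(nat \<Rightarrow> real) \<Rightarrow> real \<Rightarrow> nat \<Rightarrow> real poly mat2" where
  "link_prod_poly h m 0 = mat2_one"
| "link_prod_poly h m (Suc j) =
     mat2_mult ([:(1 + m) / sqrt m, - h j / sqrt m:], -1, 1, 0) (link_prod_poly h m j)"

lemma mat2_poly_eval_link_prod_poly: "mat2_poly_eval (link_prod_poly h m j) lam = link_prod h m lam j"
  by (induct j) (simp_all add: mat2_poly_eval_mult mat2_one_def link_step_def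
      diff_divide_distrib add_divide_distrib mult.commute)

lemma mat2_degree_le_link_prod_poly: "mat2_degree_le (link_prod_poly h m j) j"
proof (induct j)
  case (Suc j)
  obtain a b c d where P: "link_prod_poly h m j = (a, b, c, d)" by (cases "link_prod_poly h m j")
  then have degrees: "degree a \<le> j" "degree b \<le> j" "degree c \<le> j" "degree d \<le> j"
    using Suc by auto
  let ?s = "[:(1 + m) / sqrt m, - h j / sqrt m:]"
  have "degree ?s \<le> 1" by simp
  then have "degree (?s * a) \<le> Suc j" and "degree (?s * b) \<le> Suc j"
    using degrees degree_mult_le[of ?s a] degree_mult_le[of ?s b] by linarith+
  then show ?case
    unfolding link_prod_poly.simps P mat2_mult.simps mat2_degree_le.simps
    using degrees by (intro conjI degree_add_le) auto
qed (simp add: mat2_one_def)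

lemma link_sigma_poly: "\<exists>q. degree q \<le> K \<and> (\<forall>lam. link_sigma h m K lam = poly q lam)"
proof -
  obtain a b c d where P: "link_prod_poly h m K = (a, b, c, d)" by (cases "link_prod_poly h m K")
  then have "degree (Polynomial.smult (1 / 2) (a + d)) \<le> K"
    using mat2_degree_le_link_prod_poly[of h m K] by (simp add: degree_add_le)
  moreover have "link_sigma h m K lam = poly (Polynomial.smult (1 / 2) (a + d)) lam" for lam
    using P mat2_poly_eval_link_prod_poly[of h m K lam, symmetric] by (simp add: link_sigma_eq_trace)
  ultimately show ?thesis by blast
qed

text \<open>At \<open>\<lambda> = 0\<close> all factors coincide, with eigenvalues \<open>\<surd>m\<close> and \<open>1/\<surd>m\<close>.\<close>
lemma link_sigma_at_0:
  assumes "0 < m"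
  shows "link_sigma h m K 0 = (sqrt m ^ K + 1 / sqrt m ^ K) / 2"
proof -
  define s where "s = sqrt m"
  have s: "0 < s" "s * s = m" using assms by (auto simp: s_def)
  define X :: "real mat2" where "X = ((1 + m) / s, -1, 1, 0)"
  have step: "link_step h m 0 i = X" for i by (simp add: link_step_def X_def s_def)
  have trace_X: "mat2_trace X = s + 1 / s" and det_X: "mat2_det X = 1"
    using s by (simp_all add: X_def field_simps)
  have "mat2_trace (link_prod h m 0 j) = s ^ j + 1 / s ^ j \<and>
      mat2_trace (link_prod h m 0 (Suc j)) = s ^ Suc j + 1 / s ^ Suc j" for j
  proof (induct j)
    case 0
    then show ?case using s by (simp add: mat2_one_def step X_def field_simps)
  next
    case (Suc j)
    have "mat2_trace (link_prod h m 0 (Suc (Suc j))) =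
        mat2_trace X * mat2_trace (link_prod h m 0 (Suc j)) - mat2_det X * mat2_trace (link_prod h m 0 j)"
      by (simp add: step mat2_trace_cayley_hamilton)
    also have "\<dots> = (s + 1 / s) * (s ^ Suc j + 1 / s ^ Suc j) - (s ^ j + 1 / s ^ j)"
      using Suc by (simp only: trace_X det_X mult_1_left)
    also have "\<dots> = s ^ Suc (Suc j) + 1 / s ^ Suc (Suc j)"
      using s(1) by (simp add: field_simps)
    finally show ?case using Suc by simp
  qed
  then show ?thesis by (simp add: link_sigma_eq_trace s_def)
qed

definition hb_step :: "(nat \<Rightarrow> real) \<Rightarrow> real \<Rightarrow> real \<Rightarrow> nat \<Rightarrow> real mat2" where
  "hb_step h m lam i = (1 + m - h i * lam, -m, 1, 0)"

fun hb_prod :: "(nat \<Rightarrow> real) \<Rightarrow> real \<Rightarrow> real \<Rightarrow> nat \<Rightarrow> real mat2" where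
  "hb_prod h m lam 0 = mat2_one"
| "hb_prod h m lam (Suc j) = mat2_mult (hb_step h m lam j) (hb_prod h m lam j)"

text \<open>\<open>hb_step = \<surd>m D N D\<^sup>-\<^sup>1\<close> with \<open>D = diag (1, 1/\<surd>m)\<close>, where \<open>N\<close> is the corresponding \<open>link_step\<close>.\<close>
lemma hb_prod_eq_scaled_link_prod:
  assumes "0 < m" and "link_prod h m lam j = (a, b, c, d)"
  shows "hb_prod h m lam j =
    (sqrt m ^ j * a, sqrt m ^ j * sqrt m * b, sqrt m ^ j / sqrt m * c, sqrt m ^ j * d)"
  using assms(2)
proof (induct j arbitrary: a b c d)
  case 0
  then show ?case by (auto simp: mat2_one_def)
next
  case (Suc j)
  define s where "s = sqrt m"
  have s: "0 < s" "s * s = m" using assms(1) by (auto simp: s_def)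
  obtain a' b' c' d' where P: "link_prod h m lam j = (a', b', c', d')" by (cases "link_prod h m lam j")
  let ?x = "1 + m - h j * lam"
  have "mat2_mult (?x / s, -1, 1, 0) (a', b', c', d') = (a, b, c, d)"
    using Suc.prems P by (simp only: link_prod.simps link_step_def s_def[symmetric])
  then have abcd: "a = ?x / s * a' + -1 * c'" "b = ?x / s * b' + -1 * d'" "c = 1 * a' + 0 * c'"
    "d = 1 * b' + 0 * d'"
    by (simp_all only: mat2_mult.simps prod.inject eq_commute)
  have "hb_prod h m lam (Suc j) =
      mat2_mult (?x, - m, 1, 0) (s ^ j * a', s ^ j * s * b', s ^ j / s * c', s ^ j * d')"
    using Suc.hyps[OF P] by (simp add: hb_step_def s_def)
  also have "\<dots> = (s ^ Suc j * a, s ^ Suc j * s * b, s ^ Suc j / s * c, s ^ Suc j * d)"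
    unfolding abcd s(2)[symmetric] using s(1) by (simp add: field_simps)
  finally show ?case by (simp add: s_def)
qed

lemma mat2_trace_hb_prod:
  "0 < m \<Longrightarrow> mat2_trace (hb_prod h m lam j) = sqrt m ^ j * mat2_trace (link_prod h m lam j)"
  by (cases "link_prod h m lam j") (simp add: hb_prod_eq_scaled_link_prod algebra_simps)

lemma mat2_det_hb_prod: "mat2_det (hb_prod h m lam j) = m ^ j"
  by (induct j) (simp_all add: mat2_det_mult mat2_one_def hb_step_def)

text \<open>The pair \<open>(P\<^sub>t, P\<^sub>t\<^sub>-\<^sub>1)\<close>; the ghost value \<open>P\<^sub>-\<^sub>1 = P\<^sub>1\<close> makes the
  special first step \<open>x\<^sub>1 = x\<^sub>0 - h\<^sub>0/(1+m) \<nabla>f(x\<^sub>0)\<close> an instance of the general one.\<close>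
definition res_state :: "(nat \<Rightarrow> real) \<Rightarrow> real \<Rightarrow> nat \<Rightarrow> real \<Rightarrow> nat \<Rightarrow> real \<times> real" where
  "res_state h m K lam t =
     (poly (res_poly h m K t) lam, poly (res_poly h m K (if t = 0 then 1 else t - 1)) lam)"

lemma res_state_Suc:
  assumes "0 < m"
  shows "res_state h m K lam (Suc t) = mat2_apply (hb_step h m lam (t mod K)) (res_state h m K lam t)"
proof (cases t)
  case 0
  have "1 + m \<noteq> 0" using assms by simp
  with 0 show ?thesis by (simp add: res_state_def hb_step_def field_simps)
next
  case (Suc t')
  then show ?thesis by (simp add: res_state_def hb_step_def algebra_simps)
qed

lemma res_state_block:
  assumes "0 < m" and "j \<le> K"
  shows "res_state h m K lam (n * K + j) = mat2_apply (hb_prod h m lam j) (res_state h m K lam (n * K))"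
  using assms(2)
proof (induct j)
  case (Suc j)
  then have "(n * K + j) mod K = j" by simp
  then show ?case
    using Suc res_state_Suc[OF assms(1), of h K lam "n * K + j"] by (simp add: mat2_apply_mult)
qed simp

text \<open>Cayley--Hamilton for the one-cycle transfer matrix, whose trace is \<open>2 \<surd>m\<^sup>K \<sigma>(\<lambda>)\<close> and
  whose determinant is \<open>m\<^sup>K\<close>.\<close>
lemma res_state_recurrence:
  assumes "0 < m"
  shows "res_state h m K lam ((n + 2) * K) =
    (2 * sqrt m ^ K * link_sigma h m K lam * fst (res_state h m K lam ((n + 1) * K))
       - m ^ K * fst (res_state h m K lam (n * K)),
     2 * sqrt m ^ K * link_sigma h m K lam * snd (res_state h m K lam ((n + 1) * K))
       - m ^ K * snd (res_state h m K lam (n * K)))"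
proof -
  have next_cycle:
    "res_state h m K lam (Suc k * K) = mat2_apply (hb_prod h m lam K) (res_state h m K lam (k * K))" for k
    using res_state_block[OF assms order_refl, where h=h and lam=lam and n=k] by (simp add: add.commute)
  have "mat2_trace (hb_prod h m lam K) = 2 * sqrt m ^ K * link_sigma h m K lam"
    using assms by (simp add: mat2_trace_hb_prod link_sigma_eq_trace)
  moreover have "res_state h m K lam ((n + 2) * K) =
      mat2_apply (hb_prod h m lam K) (mat2_apply (hb_prod h m lam K) (res_state h m K lam (n * K)))"
    using next_cycle[of "Suc n"] next_cycle[of n] by (simp add: numeral_2_eq_2)
  ultimately show ?thesis
    using next_cycle[of n] by (simp add: mat2_apply_cayley_hamilton mat2_det_hb_prod)
qed

lemma res_poly_recurrence:
  assumes "0 < m"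
  shows "poly (res_poly h m K ((n + 2) * K)) lam =
    2 * sqrt m ^ K * link_sigma h m K lam * poly (res_poly h m K ((n + 1) * K)) lam
      - m ^ K * poly (res_poly h m K (n * K)) lam"
  using arg_cong[OF res_state_recurrence[OF assms, of h K lam n], of fst] by (simp add: res_state_def)

section \<open>Chebyshev-type recurrences and elementary inequalities\<close>

lemma chebyshev_recurrence_linear_growth:
  fixes x :: "nat \<Rightarrow> real"
  assumes rec: "\<And>n. x (Suc (Suc n)) = 2 * c * x (Suc n) - x n" and "\<bar>c\<bar> \<le> 1"
  shows "\<bar>x n\<bar> \<le> (real n + 1) * (\<bar>x 0\<bar> + \<bar>x 1\<bar>)"
proof -
  txt \<open>The quadratic form \<open>E\<close> is conserved, and it bounds the increments \<open>x\<^sub>n\<^sub>+\<^sub>1 - c x\<^sub>n\<close>.\<close>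
  define E where "E = (x 1)\<^sup>2 - 2 * c * x 1 * x 0 + (x 0)\<^sup>2"
  have conserved: "(x (Suc n))\<^sup>2 - 2 * c * x (Suc n) * x n + (x n)\<^sup>2 = E" for n
    by (induct n) (simp_all add: E_def rec power2_eq_square algebra_simps)
  have E_bound: "(x (Suc n) - c * x n)\<^sup>2 \<le> E" for n
  proof -
    have "(x (Suc n) - c * x n)\<^sup>2 + (1 - c\<^sup>2) * (x n)\<^sup>2 = E"
      using conserved[of n] by (simp add: power2_eq_square algebra_simps)
    moreover have "0 \<le> (1 - c\<^sup>2) * (x n)\<^sup>2"
      using \<open>\<bar>c\<bar> \<le> 1\<close> by (simp add: abs_square_le_1)
    ultimately show ?thesis by linarith
  qed
  have increment: "\<bar>x (Suc n) - c * x n\<bar> \<le> sqrt E" for n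
    using real_sqrt_le_mono[OF E_bound[of n]] by simp
  have E_le: "E \<le> (\<bar>x 0\<bar> + \<bar>x 1\<bar>)\<^sup>2"
  proof -
    have "\<bar>c * x 1 * x 0\<bar> \<le> \<bar>x 1\<bar> * \<bar>x 0\<bar>"
      using \<open>\<bar>c\<bar> \<le> 1\<close> by (simp add: abs_mult mult_left_le_one_le mult.assoc)
    then show ?thesis by (simp add: E_def power2_eq_square algebra_simps abs_mult[symmetric])
  qed
  have sqrt_E: "sqrt E \<le> \<bar>x 0\<bar> + \<bar>x 1\<bar>"
    using real_sqrt_le_mono[OF E_le] by simp
  have "\<bar>x n\<bar> \<le> \<bar>x 0\<bar> + real n * sqrt E"
  proof (induct n)
    case (Suc n)
    have "\<bar>c * x n\<bar> \<le> \<bar>x n\<bar>" using \<open>\<bar>c\<bar> \<le> 1\<close> by (simp add: abs_mult mult_left_le_one_le)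
    then show ?case using Suc increment[of n] by (simp add: algebra_simps)
  qed simp
  also have "\<dots> \<le> (real n + 1) * (\<bar>x 0\<bar> + \<bar>x 1\<bar>)"
    using mult_left_mono[OF sqrt_E, of "real n"] abs_ge_zero[of "x 1"] by (simp add: algebra_simps)
  finally show ?thesis .
qed

lemma chebyshev_recurrence_unit_eventually_ge:
  fixes x :: "nat \<Rightarrow> real"
  assumes rec: "\<And>n. x (Suc (Suc n)) = 2 * c * x (Suc n) - x n" and "\<bar>c\<bar> = 1"
  shows "\<exists>N. \<forall>n\<ge>N. \<bar>x 0\<bar> \<le> \<bar>x n\<bar>"
proof -
  txt \<open>For \<open>c = \<plusminus>1\<close> the sequence \<open>c\<^sup>n x\<^sub>n\<close> is arithmetic.\<close>
  have "c * c = 1" using abs_mult_self_eq[of c] \<open>\<bar>c\<bar> = 1\<close> by simp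
  define \<beta> where "\<beta> = c * x 1 - x 0"
  have arithmetic: "c ^ n * x n = x 0 + real n * \<beta> \<and> c ^ Suc n * x (Suc n) = x 0 + real (Suc n) * \<beta>" for n
  proof (induct n)
    case (Suc n)
    have "c ^ Suc (Suc n) * x (Suc (Suc n)) = (c * c) * (2 * (c ^ Suc n * x (Suc n)) - c ^ n * x n)"
      by (simp add: rec algebra_simps)
    then show ?case using Suc \<open>c * c = 1\<close> by (simp add: algebra_simps)
  qed (simp add: \<beta>_def)
  have abs_x: "\<bar>x n\<bar> = \<bar>x 0 + real n * \<beta>\<bar>" for n
  proof -
    have "\<bar>c ^ n\<bar> = 1" using \<open>\<bar>c\<bar> = 1\<close> by (simp add: power_abs)
    then have "\<bar>x n\<bar> = \<bar>c ^ n * x n\<bar>" by (simp add: abs_mult)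
    with arithmetic[of n] show ?thesis by simp
  qed
  show ?thesis
  proof (cases "\<beta> = 0")
    case True
    have "\<bar>x 0\<bar> \<le> \<bar>x n\<bar>" for n using abs_x[of n] True by simp
    then show ?thesis by blast
  next
    case False
    define N where "N = nat \<lceil>2 * \<bar>x 0\<bar> / \<bar>\<beta>\<bar>\<rceil>"
    have "\<bar>x 0\<bar> \<le> \<bar>x n\<bar>" if "N \<le> n" for n
    proof -
      have "2 * \<bar>x 0\<bar> / \<bar>\<beta>\<bar> \<le> real n" using that by (simp add: N_def nat_le_iff ceiling_le_iff)
      then have "2 * \<bar>x 0\<bar> \<le> \<bar>real n * \<beta>\<bar>" using False by (simp add: field_simps abs_mult)
      then have "\<bar>x 0\<bar> \<le> \<bar>x 0 + real n * \<beta>\<bar>" by linarith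
      then show ?thesis using abs_x[of n] by simp
    qed
    then show ?thesis by (intro exI[of _ N]) auto
  qed
qed

lemma scaled_chebyshev_recurrence:
  fixes F :: "nat \<Rightarrow> real"
  assumes "0 < r" and rec: "\<And>n. F (n + 2) = 2 * r * c * F (n + 1) - r\<^sup>2 * F n"
  shows "F (Suc (Suc n)) / r ^ Suc (Suc n) = 2 * c * (F (Suc n) / r ^ Suc n) - F n / r ^ n"
  using rec[of n] \<open>0 < r\<close> by (simp add: field_simps power2_eq_square)

lemma scaled_chebyshev_linear_growth:
  fixes F :: "nat \<Rightarrow> real"
  assumes "0 < r" and rec: "\<And>n. F (n + 2) = 2 * r * c * F (n + 1) - r\<^sup>2 * F n" and "\<bar>c\<bar> \<le> 1"
  shows "\<bar>F n\<bar> \<le> (real n + 1) * (\<bar>F 0\<bar> + \<bar>F 1\<bar> / r) * r ^ n"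
proof -
  have "\<bar>F n / r ^ n\<bar> \<le> (real n + 1) * (\<bar>F 0 / r ^ 0\<bar> + \<bar>F 1 / r ^ 1\<bar>)"
    by (rule chebyshev_recurrence_linear_growth[of "\<lambda>n. F n / r ^ n", OF
          scaled_chebyshev_recurrence[OF assms(1,2)] \<open>\<bar>c\<bar> \<le> 1\<close>])
  then show ?thesis using \<open>0 < r\<close> by (simp add: abs_divide field_simps)
qed

lemma scaled_chebyshev_eventually_ge:
  fixes F :: "nat \<Rightarrow> real"
  assumes "0 < r" and rec: "\<And>n. F (n + 2) = 2 * r * c * F (n + 1) - r\<^sup>2 * F n" and "\<bar>c\<bar> = 1"
  shows "\<exists>N. \<forall>n\<ge>N. \<bar>F 0\<bar> * r ^ n \<le> \<bar>F n\<bar>"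
proof -
  obtain N where "\<forall>n\<ge>N. \<bar>F 0 / r ^ 0\<bar> \<le> \<bar>F n / r ^ n\<bar>"
    using chebyshev_recurrence_unit_eventually_ge[of "\<lambda>n. F n / r ^ n", OF
        scaled_chebyshev_recurrence[OF assms(1,2)] \<open>\<bar>c\<bar> = 1\<close>] by blast
  then show ?thesis using \<open>0 < r\<close> by (auto simp: abs_divide field_simps)
qed

lemma sqrt_power_square:
  assumes "0 \<le> m"
  shows "(sqrt m ^ K)\<^sup>2 = m ^ K"
proof -
  have "(sqrt m ^ K)\<^sup>2 = (sqrt m ^ 2) ^ K" by (simp flip: power_mult) (simp add: mult.commute)
  then show ?thesis using assms by simp
qed

lemma pow_powr_divide:
  fixes s :: real
  assumes "0 < s" and "0 < K"
  shows "(s ^ K) powr (x / real K) = s powr x"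
proof -
  have "(s ^ K) powr (x / real K) = s powr (real K * (x / real K))"
    using assms by (simp add: powr_realpow[symmetric] powr_powr)
  then show ?thesis using assms by simp
qed

lemma x_plus_inverse_strict_antimono:
  fixes u v :: real
  assumes "0 < u" and "u < v" and "v \<le> 1"
  shows "v + 1 / v < u + 1 / u"
proof -
  have "u * v < 1 * v" using assms by (intro mult_strict_right_mono) auto
  then have "u * v < 1" using assms by linarith
  then have "0 < (v - u) * (1 - u * v) / (u * v)" using assms by simp
  also have "\<dots> = u + 1 / u - (v + 1 / v)" using assms by (simp add: field_simps)
  finally show ?thesis by simp
qed

text \<open>\<open>J(x) = x + 1/x\<close> decreases on \<open>(0, 1]\<close> and
  \<open>J(A Y) - J(Y) J(A) / 2 = (1 - A\<^sup>2) (1 - Y\<^sup>2) / (2 A Y) \<ge> 0\<close>.\<close>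
lemma le_of_x_plus_inverse_le:
  fixes X Y A :: real
  assumes "0 < X" and "0 < Y" "Y \<le> 1" and "0 < A" "A \<le> 1"
    and le: "X + 1 / X \<le> (Y + 1 / Y) * (A + 1 / A) / 2"
  shows "A * Y \<le> X"
proof (rule ccontr)
  assume "\<not> A * Y \<le> X"
  moreover have "A * Y \<le> 1" using assms by (simp add: mult_le_one)
  ultimately have "A * Y + 1 / (A * Y) < X + 1 / X"
    using x_plus_inverse_strict_antimono[OF \<open>0 < X\<close>] by simp
  moreover have "0 \<le> (1 - A\<^sup>2) * (1 - Y\<^sup>2) / (2 * A * Y)"
    using assms by (intro divide_nonneg_pos mult_nonneg_nonneg) (auto simp: power_le_one)
  moreover have "A * Y + 1 / (A * Y) - (Y + 1 / Y) * (A + 1 / A) / 2 = (1 - A\<^sup>2) * (1 - Y\<^sup>2) / (2 * A * Y)"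
    using assms by (simp add: field_simps power2_eq_square)
  ultimately show False using le by simp
qed

lemma x_plus_inverse_root:
  fixes x :: real
  assumes "0 < x" and "x \<le> 1"
  shows "(x + 1 / x) / 2 - sqrt (((x + 1 / x) / 2)\<^sup>2 - 1) = x"
    and "(x + 1 / x) / 2 + sqrt (((x + 1 / x) / 2)\<^sup>2 - 1) = 1 / x"
proof -
  have "((x + 1 / x) / 2)\<^sup>2 - 1 = ((1 / x - x) / 2)\<^sup>2"
    using assms by (simp add: field_simps power2_eq_square)
  moreover have "0 \<le> 1 / x - x"
    using assms by (simp add: field_simps) (metis mult_le_one less_imp_le)
  ultimately have "sqrt (((x + 1 / x) / 2)\<^sup>2 - 1) = (1 / x - x) / 2" by simp
  then show "(x + 1 / x) / 2 - sqrt (((x + 1 / x) / 2)\<^sup>2 - 1) = x"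
    and "(x + 1 / x) / 2 + sqrt (((x + 1 / x) / 2)\<^sup>2 - 1) = 1 / x"
    by (simp_all add: field_simps)
qed

lemma x_plus_inverse_surj:
  fixes S :: real
  assumes "1 \<le> S"
  obtains Y where "0 < Y" and "Y \<le> 1" and "S = (Y + 1 / Y) / 2"
proof -
  define r where "r = sqrt (S\<^sup>2 - 1)"
  have "r < S"
    using assms real_sqrt_less_mono[of "S\<^sup>2 - 1" "S\<^sup>2"] by (simp add: r_def)
  moreover have "S - 1 \<le> r"
    using assms unfolding r_def by (intro real_le_rsqrt) (simp add: power2_eq_square algebra_simps)
  moreover have "r\<^sup>2 = S\<^sup>2 - 1"
    using assms by (simp add: r_def one_le_power)
  then have "(S - r) * (S + r) = 1"
    by (simp add: algebra_simps power2_eq_square)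
  ultimately show ?thesis
    by (intro that[of "S - r"]) (auto simp: field_simps)
qed

section \<open>Growth of the residual polynomials\<close>

definition hb_growth :: "(nat \<Rightarrow> real) \<Rightarrow> real \<Rightarrow> nat \<Rightarrow> real \<Rightarrow> real" where
  "hb_growth h m K L = 1 + 2 * m + (\<Sum>i<K. \<bar>h i\<bar>) * L"

fun max_abs :: "real \<times> real \<Rightarrow> real" where
  "max_abs (u, v) = max \<bar>u\<bar> \<bar>v\<bar>"

lemma hb_growth_ge_1:
  assumes "0 \<le> m" and "0 \<le> L"
  shows "1 \<le> hb_growth h m K L"
proof -
  have "0 \<le> (\<Sum>i<K. \<bar>h i\<bar>) * L" using assms by (simp add: sum_nonneg)
  then show ?thesis using assms by (simp add: hb_growth_def)
qed

lemma abs_step_size_le: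
  fixes h :: "nat \<Rightarrow> real"
  assumes "i < K" and "\<bar>lam\<bar> \<le> L"
  shows "\<bar>h i * lam\<bar> \<le> (\<Sum>i<K. \<bar>h i\<bar>) * L"
proof -
  have "\<bar>h i\<bar> \<le> (\<Sum>i<K. \<bar>h i\<bar>)"
    using assms(1) by (intro member_le_sum[of i "{..<K}" "\<lambda>i. \<bar>h i\<bar>"]) auto
  then show ?thesis
    unfolding abs_mult using assms(2) by (intro mult_mono) (auto simp: sum_nonneg)
qed

lemma max_abs_res_state_Suc_le:
  assumes "0 < m" and "0 < K" and lam: "\<bar>lam\<bar> \<le> L"
  shows "max_abs (res_state h m K lam (Suc t)) \<le> hb_growth h m K L * max_abs (res_state h m K lam t)"
proof -
  obtain u v where state: "res_state h m K lam t = (u, v)" by (cases "res_state h m K lam t")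
  define i where "i = t mod K"
  define M where "M = max \<bar>u\<bar> \<bar>v\<bar>"
  define R where "R = hb_growth h m K L"
  have "0 \<le> L" using lam by linarith
  then have "1 \<le> R" using assms by (simp add: R_def hb_growth_ge_1)
  have "\<bar>u\<bar> \<le> M" "\<bar>v\<bar> \<le> M" "0 \<le> M" by (auto simp: M_def)
  have "\<bar>1 + m - h i * lam\<bar> \<le> \<bar>1 + m\<bar> + \<bar>h i * lam\<bar>" by (rule abs_triangle_ineq4)
  moreover have "\<bar>h i * lam\<bar> \<le> (\<Sum>i<K. \<bar>h i\<bar>) * L"
    using \<open>0 < K\<close> lam by (simp add: i_def abs_step_size_le)
  ultimately have "\<bar>1 + m - h i * lam\<bar> \<le> 1 + m + (\<Sum>i<K. \<bar>h i\<bar>) * L"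
    using \<open>0 < m\<close> by simp
  then have "\<bar>1 + m - h i * lam\<bar> * \<bar>u\<bar> \<le> (1 + m + (\<Sum>i<K. \<bar>h i\<bar>) * L) * M"
    using \<open>\<bar>u\<bar> \<le> M\<close> by (intro mult_mono) auto
  moreover have "m * \<bar>v\<bar> \<le> m * M" using \<open>0 < m\<close> \<open>\<bar>v\<bar> \<le> M\<close> by simp
  moreover have "\<bar>(1 + m - h i * lam) * u + - m * v\<bar> \<le> \<bar>1 + m - h i * lam\<bar> * \<bar>u\<bar> + m * \<bar>v\<bar>"
    using abs_triangle_ineq[of "(1 + m - h i * lam) * u" "- m * v"] \<open>0 < m\<close> by (simp add: abs_mult)
  ultimately have "\<bar>(1 + m - h i * lam) * u + - m * v\<bar> \<le> R * M"
    by (simp add: R_def hb_growth_def algebra_simps)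
  moreover have "\<bar>u\<bar> \<le> R * M"
    using \<open>\<bar>u\<bar> \<le> M\<close> mult_right_mono[OF \<open>1 \<le> R\<close> \<open>0 \<le> M\<close>] by simp
  ultimately show ?thesis
    using res_state_Suc[OF \<open>0 < m\<close>, of h K lam t] state by (simp add: hb_step_def i_def R_def M_def)
qed

lemma max_abs_res_state_add_le:
  assumes "0 < m" and "0 < K" and "\<bar>lam\<bar> \<le> L"
  shows "max_abs (res_state h m K lam (t + j)) \<le> hb_growth h m K L ^ j * max_abs (res_state h m K lam t)"
proof (induct j)
  case (Suc j)
  have "0 \<le> L" using assms(3) by linarith
  then have "0 \<le> hb_growth h m K L" using assms(1) hb_growth_ge_1[of m L h K] by simp
  then have "max_abs (res_state h m K lam (t + Suc j)) \<le>
      hb_growth h m K L * (hb_growth h m K L ^ j * max_abs (res_state h m K lam t))"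
    using order_trans[OF max_abs_res_state_Suc_le[OF assms, of h "t + j"] mult_left_mono[OF Suc]]
    by simp
  then show ?case by simp
qed simp

lemma max_abs_res_state_0_le:
  assumes "0 < m" and "0 < K" and "\<bar>lam\<bar> \<le> L"
  shows "max_abs (res_state h m K lam 0) \<le> hb_growth h m K L"
proof -
  have "\<bar>h 0 / (1 + m) * lam\<bar> = \<bar>h 0 * lam\<bar> / (1 + m)"
    using assms(1) by (simp add: abs_mult)
  also have "\<dots> \<le> \<bar>h 0 * lam\<bar>"
    using assms(1) by (intro mult_imp_div_pos_le) (auto simp: mult_le_cancel_left1)
  also have "\<dots> \<le> (\<Sum>i<K. \<bar>h i\<bar>) * L" using assms by (intro abs_step_size_le)
  finally have "\<bar>1 - h 0 / (1 + m) * lam\<bar> \<le> 1 + (\<Sum>i<K. \<bar>h i\<bar>) * L"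
    using abs_triangle_ineq4[of 1 "h 0 / (1 + m) * lam"] by simp
  moreover have "0 \<le> (\<Sum>i<K. \<bar>h i\<bar>) * L"
    using assms by (simp add: sum_nonneg)
  ultimately show ?thesis
    using assms(1) by (simp add: res_state_def hb_growth_def algebra_simps)
qed

lemma max_abs_nonneg: "0 \<le> max_abs w"
  by (cases w) simp

lemma abs_fst_le_max_abs: "\<bar>fst w\<bar> \<le> max_abs w"
  and abs_snd_le_max_abs: "\<bar>snd w\<bar> \<le> max_abs w"
  by (cases w; simp)+

lemma max_abs_res_state_cycles_le:
  assumes "0 < m" and "0 < K" and "\<bar>lam\<bar> \<le> L" and "\<bar>link_sigma h m K lam\<bar> \<le> 1"
  defines "R \<equiv> hb_growth h m K L" and "r \<equiv> sqrt m ^ K"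
  shows "max_abs (res_state h m K lam (n * K)) \<le> (real n + 1) * (R + R ^ Suc K / r) * r ^ n"
proof -
  have "0 < r" using assms by (simp add: r_def)
  have "m ^ K = r\<^sup>2" using assms by (simp add: r_def sqrt_power_square)
  have "0 \<le> L" using assms(3) by linarith
  then have "0 \<le> R" using assms(1) hb_growth_ge_1[of m L h K] by (simp add: R_def)
  have state_0: "max_abs (res_state h m K lam 0) \<le> R"
    using max_abs_res_state_0_le[OF assms(1-3)] by (simp add: R_def)
  have "max_abs (res_state h m K lam (0 + K)) \<le> R ^ K * max_abs (res_state h m K lam 0)"
    unfolding R_def by (rule max_abs_res_state_add_le[OF assms(1-3)])
  also have "\<dots> \<le> R ^ K * R" using state_0 \<open>0 \<le> R\<close> by (simp add: mult_left_mono)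
  finally have state_K: "max_abs (res_state h m K lam K) \<le> R ^ Suc K" by (simp add: mult.commute)
  have component: "\<bar>g (res_state h m K lam (n * K))\<bar> \<le> (real n + 1) * (R + R ^ Suc K / r) * r ^ n"
    if g: "\<And>w. \<bar>g w\<bar> \<le> max_abs w" and rec: "\<And>k. g (res_state h m K lam ((k + 2) * K)) =
        2 * r * link_sigma h m K lam * g (res_state h m K lam ((k + 1) * K)) - r\<^sup>2 * g (res_state h m K lam (k * K))"
    for g
  proof -
    define F where "F k = g (res_state h m K lam (k * K))" for k
    have "\<bar>F n\<bar> \<le> (real n + 1) * (\<bar>F 0\<bar> + \<bar>F 1\<bar> / r) * r ^ n"
      using \<open>0 < r\<close> rec assms(4) unfolding F_def by (rule scaled_chebyshev_linear_growth)
    also have "\<dots> \<le> (real n + 1) * (R + R ^ Suc K / r) * r ^ n"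
    proof -
      have "\<bar>F 0\<bar> \<le> R" "\<bar>F 1\<bar> \<le> R ^ Suc K"
        using order_trans[OF g state_0] order_trans[OF g state_K] by (simp_all add: F_def)
      then have "\<bar>F 0\<bar> + \<bar>F 1\<bar> / r \<le> R + R ^ Suc K / r"
        using \<open>0 < r\<close> by (intro add_mono divide_right_mono) auto
      then show ?thesis using \<open>0 < r\<close> by (intro mult_right_mono mult_left_mono) auto
    qed
    finally show ?thesis by (simp add: F_def)
  qed
  have "\<bar>fst (res_state h m K lam (n * K))\<bar> \<le> (real n + 1) * (R + R ^ Suc K / r) * r ^ n"
    using res_state_recurrence[OF \<open>0 < m\<close>, of h K lam] \<open>m ^ K = r\<^sup>2\<close>
    by (intro component abs_fst_le_max_abs) (simp add: r_def)
  moreover have "\<bar>snd (res_state h m K lam (n * K))\<bar> \<le> (real n + 1) * (R + R ^ Suc K / r) * r ^ n"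
    using res_state_recurrence[OF \<open>0 < m\<close>, of h K lam] \<open>m ^ K = r\<^sup>2\<close>
    by (intro component abs_snd_le_max_abs) (simp add: r_def)
  ultimately show ?thesis by (cases "res_state h m K lam (n * K)") simp
qed

lemma abs_res_poly_le_uniform:
  assumes "0 < m" and "m < 1" and "1 \<le> K" and L: "\<forall>l\<in>Lam. \<bar>l\<bar> \<le> L"
    and sigma: "\<forall>l\<in>Lam. \<bar>link_sigma h m K l\<bar> \<le> 1"
  shows "\<exists>C>0. \<forall>t. \<forall>l\<in>Lam. \<bar>poly (res_poly h m K t) l\<bar> \<le> C * (real t + 1) * sqrt m ^ t"
proof (cases "Lam = {}")
  case True
  then show ?thesis by (intro exI[of _ 1]) simp
next
  case False
  then have "0 \<le> L" using L by force
  define R where "R = hb_growth h m K L"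
  define r where "r = sqrt m ^ K"
  define C where "C = R ^ K * (R + R ^ Suc K / r) / r"
  have "1 \<le> R" using \<open>0 < m\<close> \<open>0 \<le> L\<close> by (simp add: R_def hb_growth_ge_1)
  have "0 < r" "r \<le> 1" using assms by (simp_all add: r_def power_le_one)
  then have "0 < C"
    using \<open>1 \<le> R\<close> unfolding C_def by (intro divide_pos_pos mult_pos_pos add_pos_pos) auto
  moreover have "\<bar>poly (res_poly h m K t) l\<bar> \<le> C * (real t + 1) * sqrt m ^ t" if "l \<in> Lam" for t l
  proof -
    define n where "n = t div K"
    define j where "j = t mod K"
    have t: "t = n * K + j" and "j < K" using assms by (simp_all add: n_def j_def)
    have "\<bar>poly (res_poly h m K t) l\<bar> \<le> max_abs (res_state h m K l t)"
      by (simp add: res_state_def)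
    also have "\<dots> \<le> R ^ j * max_abs (res_state h m K l (n * K))"
      unfolding t R_def using assms L that by (intro max_abs_res_state_add_le) auto
    also have "\<dots> \<le> R ^ K * ((real n + 1) * (R + R ^ Suc K / r) * r ^ n)"
    proof (rule mult_mono)
      show "R ^ j \<le> R ^ K" using \<open>1 \<le> R\<close> \<open>j < K\<close> by (intro power_increasing) auto
      show "max_abs (res_state h m K l (n * K)) \<le> (real n + 1) * (R + R ^ Suc K / r) * r ^ n"
        unfolding R_def r_def using assms L sigma that by (intro max_abs_res_state_cycles_le) auto
    qed (use \<open>1 \<le> R\<close> max_abs_nonneg in auto)
    also have "\<dots> \<le> R ^ K * ((real t + 1) * (R + R ^ Suc K / r) * (sqrt m ^ t / r))"
    proof -
      have "sqrt m ^ t = r ^ n * sqrt m ^ j"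
        by (simp add: t r_def power_add power_mult mult.commute)
      moreover have "r \<le> sqrt m ^ j"
        unfolding r_def using assms \<open>j < K\<close> by (intro power_decreasing) auto
      ultimately have "r ^ n \<le> sqrt m ^ t / r"
        using \<open>0 < r\<close> by (simp add: pos_le_divide_eq mult_left_mono)
      moreover have "real n + 1 \<le> real t + 1" using div_le_dividend[of t K] by (simp add: n_def)
      ultimately show ?thesis
        using \<open>0 < r\<close> \<open>1 \<le> R\<close> by (intro mult_left_mono mult_mono) auto
    qed
    also have "\<dots> = C * (real t + 1) * sqrt m ^ t" by (simp add: C_def)
    finally show ?thesis .
  qed
  ultimately show ?thesis by blast
qed

lemma abs_res_poly_eventually_ge:
  assumes "0 < m" and "\<bar>link_sigma h m K l\<bar> = 1"
  shows "\<exists>N. \<forall>n\<ge>N. sqrt m ^ (n * K) \<le> \<bar>poly (res_poly h m K (n * K)) l\<bar>"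
proof -
  define r where "r = sqrt m ^ K"
  have "0 < r" using assms by (simp add: r_def)
  have "m ^ K = r\<^sup>2" using assms by (simp add: r_def sqrt_power_square)
  then have "\<exists>N. \<forall>n\<ge>N. \<bar>poly (res_poly h m K (0 * K)) l\<bar> * r ^ n \<le> \<bar>poly (res_poly h m K (n * K)) l\<bar>"
    using res_poly_recurrence[OF assms(1), of h K _ l]
    by (intro scaled_chebyshev_eventually_ge[OF \<open>0 < r\<close> _ assms(2)]) (simp add: r_def)
  then show ?thesis by (simp add: r_def mult.commute flip: power_mult)
qed

lemma worst_rate_le_uniform:
  assumes L: "\<forall>l\<in>Lam. \<bar>l\<bar> \<le> L" and "Lam \<noteq> {}" and "0 < m" and "m < 1" and "1 \<le> K"
    and sigma: "\<forall>l\<in>Lam. \<bar>link_sigma h m K l\<bar> \<le> 1"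
  shows "\<exists>C>0. \<forall>t. 0 \<le> worst_rate Lam h m K t \<and> worst_rate Lam h m K t \<le> C * (real t + 1) * sqrt m ^ t"
proof -
  obtain C where "0 < C" and C: "\<forall>t. \<forall>l\<in>Lam. \<bar>poly (res_poly h m K t) l\<bar> \<le> C * (real t + 1) * sqrt m ^ t"
    using abs_res_poly_le_uniform[OF assms(3-5) L sigma] by blast
  obtain l where "l \<in> Lam" using assms(2) by blast
  have "0 \<le> worst_rate Lam h m K t" for t
    using abs_res_poly_le_worst_rate[OF \<open>l \<in> Lam\<close>] C by (meson abs_ge_zero order_trans)
  moreover have "worst_rate Lam h m K t \<le> C * (real t + 1) * sqrt m ^ t" for t
    using worst_rate_le[OF assms(2)] C by blast
  ultimately show ?thesis using \<open>0 < C\<close> by blast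
qed

lemma worst_rate_bigo:
  assumes "\<forall>l\<in>Lam. \<bar>l\<bar> \<le> L" and "Lam \<noteq> {}" and "0 < m" and "m < 1" and "1 \<le> K"
    and "\<forall>l\<in>Lam. \<bar>link_sigma h m K l\<bar> \<le> 1"
  shows "(\<lambda>t. worst_rate Lam h m K t) \<in> O(\<lambda>t. real t * sqrt m ^ t)"
proof -
  obtain C where "0 < C" and nonneg: "\<And>t. 0 \<le> worst_rate Lam h m K t"
    and bound: "\<And>t. worst_rate Lam h m K t \<le> C * (real t + 1) * sqrt m ^ t"
    using worst_rate_le_uniform[OF assms] by blast
  have "norm (worst_rate Lam h m K t) \<le> (2 * C) * norm (real t * sqrt m ^ t)" if "1 \<le> t" for t
  proof -
    have "worst_rate Lam h m K t \<le> C * (real t + 1) * sqrt m ^ t" by (rule bound)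
    also have "\<dots> \<le> C * (2 * real t) * sqrt m ^ t"
      using that \<open>0 < C\<close> \<open>0 < m\<close> by (intro mult_right_mono mult_left_mono) auto
    finally show ?thesis using nonneg[of t] \<open>0 < m\<close> by (simp add: abs_mult)
  qed
  then show ?thesis by (intro bigoI[of _ "2 * C"]) (auto simp: eventually_sequentially)
qed

lemma asymp_rate_le:
  assumes "\<forall>l\<in>Lam. \<bar>l\<bar> \<le> L" and "Lam \<noteq> {}" and "0 < m" and "m < 1" and "1 \<le> K"
    and "\<forall>l\<in>Lam. \<bar>link_sigma h m K l\<bar> \<le> 1"
  shows "asymp_rate Lam h m K \<le> ereal (sqrt m)"
proof -
  obtain C where "0 < C" and nonneg: "\<And>t. 0 \<le> worst_rate Lam h m K t"
    and bound: "\<And>t. worst_rate Lam h m K t \<le> C * (real t + 1) * sqrt m ^ t"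
    using worst_rate_le_uniform[OF assms] by blast
  define g where "g t = (C * (real t + 1)) powr (1 / real t) * sqrt m" for t :: nat
  have "(\<lambda>t::nat. (C * (real t + 1)) powr (1 / real t)) \<longlonglongrightarrow> 1"
    using \<open>0 < C\<close> by real_asymp
  then have "g \<longlonglongrightarrow> 1 * sqrt m" unfolding g_def by (intro tendsto_mult tendsto_const)
  then have "limsup (\<lambda>t. ereal (g t)) = ereal (sqrt m)"
    by (intro lim_imp_Limsup) (auto intro: tendsto_ereal)
  moreover have "\<forall>\<^sub>F t in sequentially. ereal (worst_rate Lam h m K t powr (1 / real t)) \<le> ereal (g t)"
    unfolding eventually_sequentially
  proof (intro exI allI impI)
    fix t :: nat assume "1 \<le> t"
    have "worst_rate Lam h m K t powr (1 / real t) \<le> (C * (real t + 1) * sqrt m ^ t) powr (1 / real t)"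
      using bound nonneg by (intro powr_mono2) auto
    also have "\<dots> = (C * (real t + 1)) powr (1 / real t) * (sqrt m ^ t) powr (1 / real t)"
      using \<open>0 < C\<close> by (simp add: powr_mult)
    also have "(sqrt m ^ t) powr (1 / real t) = sqrt m"
      using \<open>1 \<le> t\<close> \<open>0 < m\<close> by (simp add: powr_realpow[symmetric] powr_powr)
    finally show "ereal (worst_rate Lam h m K t powr (1 / real t)) \<le> ereal (g t)" by (simp add: g_def)
  qed
  then have "asymp_rate Lam h m K \<le> limsup (\<lambda>t. ereal (g t))"
    unfolding asymp_rate_def by (rule Limsup_mono)
  ultimately show ?thesis by simp
qed

lemma asymp_rate_ge:
  assumes L: "\<forall>l\<in>Lam. \<bar>l\<bar> \<le> L" and "0 < m" and "m < 1" and "1 \<le> K"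
    and sigma: "\<forall>l\<in>Lam. \<bar>link_sigma h m K l\<bar> \<le> 1"
    and "l \<in> Lam" and "\<bar>link_sigma h m K l\<bar> = 1"
  shows "ereal (sqrt m) \<le> asymp_rate Lam h m K"
proof -
  obtain C where C: "\<forall>t. \<forall>l\<in>Lam. \<bar>poly (res_poly h m K t) l\<bar> \<le> C * (real t + 1) * sqrt m ^ t"
    using abs_res_poly_le_uniform[OF assms(2-4) L sigma] by blast
  obtain N where N: "\<forall>n\<ge>N. sqrt m ^ (n * K) \<le> \<bar>poly (res_poly h m K (n * K)) l\<bar>"
    using abs_res_poly_eventually_ge[OF assms(2,7)] by blast
  define f where "f = (\<lambda>t. ereal (worst_rate Lam h m K t powr (1 / real t)))"
  define r where "r n = (n + N + 1) * K" for n
  have "strict_mono r" unfolding r_def using assms by (intro strict_monoI) simp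
  have "ereal (sqrt m) \<le> (f \<circ> r) n" for n
  proof -
    have "sqrt m ^ r n \<le> \<bar>poly (res_poly h m K (r n)) l\<bar>"
      using N[rule_format, of "n + N + 1"] unfolding r_def by simp
    also have "\<dots> \<le> worst_rate Lam h m K (r n)"
      by (rule abs_res_poly_le_worst_rate[OF \<open>l \<in> Lam\<close>]) (use C in blast)
    finally have "(sqrt m ^ r n) powr (1 / real (r n)) \<le> worst_rate Lam h m K (r n) powr (1 / real (r n))"
      using assms by (intro powr_mono2) auto
    moreover have "0 < r n" using assms by (simp add: r_def)
    then have "(sqrt m ^ r n) powr (1 / real (r n)) = sqrt m"
      using assms by (simp add: powr_realpow[symmetric] powr_powr)
    ultimately show ?thesis by (simp add: f_def)
  qed
  then have "ereal (sqrt m) \<le> limsup (f \<circ> r)"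
    by (intro le_Limsup always_eventually allI) simp_all
  also have "\<dots> \<le> limsup f" by (rule limsup_subseq_mono[OF \<open>strict_mono r\<close>])
  finally show ?thesis by (simp add: asymp_rate_def f_def)
qed

lemma asymp_rate_eq_sqrt:
  assumes L: "\<forall>l\<in>Lam. \<bar>l\<bar> \<le> L" and "0 < m" and "m < 1" and "1 \<le> K"
    and sigma: "\<forall>l\<in>Lam. \<bar>link_sigma h m K l\<bar> \<le> 1"
    and "l \<in> Lam" and "\<bar>link_sigma h m K l\<bar> = 1"
  shows "asymp_rate Lam h m K = ereal (sqrt m)"
proof (rule antisym)
  have "Lam \<noteq> {}" using \<open>l \<in> Lam\<close> by blast
  then show "asymp_rate Lam h m K \<le> ereal (sqrt m)" by (rule asymp_rate_le[OF L _ assms(2-5)])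
  show "ereal (sqrt m) \<le> asymp_rate Lam h m K" using assms by (rule asymp_rate_ge)
qed

section \<open>Optimal link polynomials and the rate factor\<close>

lemma optimal_link_poly_scaled_le:
  assumes optimal: "is_optimal_link_poly K Lam sK" and "degree q \<le> K" and "0 < S"
    and "\<forall>l\<in>Lam. \<bar>poly q l\<bar> \<le> S"
  shows "poly q 0 \<le> S * poly sK 0"
proof -
  have "degree (Polynomial.smult (1 / S) q) \<le> K"
    using assms(2) by (simp add: degree_smult_le order_trans)
  moreover have "\<forall>l\<in>Lam. \<bar>poly (Polynomial.smult (1 / S) q) l\<bar> \<le> 1"
    using assms(3,4) by (simp add: abs_mult divide_le_eq_1)
  ultimately have "poly (Polynomial.smult (1 / S) q) 0 \<le> poly sK 0"
    using optimal unfolding is_optimal_link_poly_def by blast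
  then show ?thesis using assms(3) by (simp add: divide_le_eq mult.commute)
qed

lemma optimal_link_poly_nonempty:
  assumes optimal: "is_optimal_link_poly K Lam sK"
  shows "Lam \<noteq> {}"
proof
  assume "Lam = {}"
  have "degree (sK + 1) \<le> K"
    using optimal degree_add_le[of sK K 1] by (simp add: is_optimal_link_poly_def)
  then have "poly (sK + 1) 0 \<le> poly sK 0"
    using optimal \<open>Lam = {}\<close> unfolding is_optimal_link_poly_def by blast
  then show False by simp
qed

lemma optimal_link_poly_at_0_ge_1: "is_optimal_link_poly K Lam sK \<Longrightarrow> 1 \<le> poly sK 0"
  using optimal_link_poly_scaled_le[of K Lam sK 1 1] by simp

text \<open>If \<open>|\<sigma>| \<le> M < 1\<close> on \<open>\<Lambda>\<close>, then \<open>\<sigma> + (1 - M)\<close> would be a better competitor.\<close>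
lemma optimal_link_poly_attains_1:
  assumes "compact Lam" and optimal: "is_optimal_link_poly K Lam sK"
  shows "\<exists>l\<in>Lam. \<bar>poly sK l\<bar> = 1"
proof -
  have "continuous_on Lam (\<lambda>x. \<bar>poly sK x\<bar>)" by (intro continuous_intros)
  then have "\<exists>l\<in>Lam. \<forall>x\<in>Lam. \<bar>poly sK x\<bar> \<le> \<bar>poly sK l\<bar>"
    using continuous_attains_sup[OF assms(1) optimal_link_poly_nonempty[OF optimal]] by simp
  then obtain l where l: "l \<in> Lam" and max: "\<forall>x\<in>Lam. \<bar>poly sK x\<bar> \<le> \<bar>poly sK l\<bar>" ..
  have "\<bar>poly sK l\<bar> \<le> 1" using l optimal by (simp add: is_optimal_link_poly_def)
  moreover have "1 \<le> \<bar>poly sK l\<bar>"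
  proof (rule ccontr)
    assume "\<not> 1 \<le> \<bar>poly sK l\<bar>"
    define q where "q = sK + [:1 - \<bar>poly sK l\<bar>:]"
    have "degree q \<le> K"
      using optimal degree_add_le[of sK K] by (simp add: is_optimal_link_poly_def q_def)
    moreover have "\<forall>x\<in>Lam. \<bar>poly q x\<bar> \<le> 1"
      using max \<open>\<not> 1 \<le> \<bar>poly sK l\<bar>\<close> by (auto simp: q_def)
    ultimately have "poly q 0 \<le> poly sK 0"
      using optimal by (simp add: is_optimal_link_poly_def)
    with \<open>\<not> 1 \<le> \<bar>poly sK l\<bar>\<close> show False by (simp add: q_def)
  qed
  ultimately show ?thesis using l by auto
qed

lemma abs_link_sigma_le_sigma_star:
  assumes "compact Lam" and "l \<in> Lam"
  shows "\<bar>link_sigma h m K l\<bar> \<le> sigma_star Lam h m K"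
proof -
  obtain q where "\<forall>lam. link_sigma h m K lam = poly q lam"
    using link_sigma_poly by blast
  then have q: "link_sigma h m K = poly q" by auto
  have "continuous_on Lam (\<lambda>x. \<bar>link_sigma h m K x\<bar>)"
    unfolding q by (intro continuous_intros)
  moreover have "Lam \<noteq> {}" using assms(2) by auto
  ultimately have "\<exists>x\<in>Lam. \<forall>y\<in>Lam. \<bar>link_sigma h m K y\<bar> \<le> \<bar>link_sigma h m K x\<bar>"
    using continuous_attains_sup[OF assms(1)] by simp
  then obtain x where "\<forall>y\<in>Lam. \<bar>link_sigma h m K y\<bar> \<le> \<bar>link_sigma h m K x\<bar>" ..
  then have "bdd_above ((\<lambda>x. \<bar>link_sigma h m K x\<bar>) ` Lam)" by (intro bdd_aboveI2) auto
  then show ?thesis unfolding sigma_star_def using assms(2) by (rule cSUP_upper2) simp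
qed

lemma rate_factor_formula_eq_sqrt:
  assumes "Lam \<noteq> {}" and "\<forall>l\<in>Lam. \<bar>link_sigma h m K l\<bar> \<le> 1"
  shows "rate_factor_formula Lam h m K = sqrt m"
proof -
  have "sigma_star Lam h m K \<le> 1"
    unfolding sigma_star_def using assms by (intro cSUP_least) auto
  then show ?thesis by (simp add: rate_factor_formula_def)
qed

text \<open>Writing \<open>max 1 \<sigma>\<^sub>* = (Y + 1/Y)/2\<close> with \<open>0 < Y \<le> 1\<close> unifies the two cases of the formula.\<close>
lemma rate_factor_formula_eq:
  assumes "0 < m" and "1 \<le> K" and "0 < Y" and "Y \<le> 1"
    and Y: "max 1 (sigma_star Lam h m K) = (Y + 1 / Y) / 2"
  shows "rate_factor_formula Lam h m K = (sqrt m ^ K / Y) powr (1 / real K)"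
proof -
  have root: "(sqrt m ^ K) powr (1 / real K) = sqrt m"
    using assms by (simp add: powr_realpow[symmetric] powr_powr)
  show ?thesis
  proof (cases "sigma_star Lam h m K \<le> 1")
    case True
    then have "(Y + 1 / Y) / 2 = 1" using Y by (simp add: max_absorb1)
    then have "Y * Y + 1 = 2 * Y" using \<open>0 < Y\<close> by (simp add: field_simps)
    moreover have "(Y - 1) * (Y - 1) = Y * Y + 1 - 2 * Y" by (simp add: algebra_simps)
    ultimately have "Y = 1" by simp
    then show ?thesis using True root by (simp add: rate_factor_formula_def)
  next
    case False
    then have S: "sigma_star Lam h m K = (Y + 1 / Y) / 2" using Y by (simp add: max_def)
    have "sigma_star Lam h m K + sqrt ((sigma_star Lam h m K)\<^sup>2 - 1) = 1 / Y"
      unfolding S by (rule x_plus_inverse_root(2)[OF \<open>0 < Y\<close> \<open>Y \<le> 1\<close>])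
    then show ?thesis
      using False root assms by (simp add: rate_factor_formula_def Let_def powr_mult powr_divide)
  qed
qed

lemma rate_factor_formula_ge:
  assumes "compact Lam" and optimal: "is_optimal_link_poly K Lam sK" and "1 \<le> K" and "0 < m"
  shows "(poly sK 0 - sqrt ((poly sK 0)\<^sup>2 - 1)) powr (1 / real K) \<le> rate_factor_formula Lam h m K"
proof -
  obtain A where "0 < A" "A \<le> 1" and s0: "poly sK 0 = (A + 1 / A) / 2"
    using x_plus_inverse_surj[OF optimal_link_poly_at_0_ge_1[OF optimal]] by blast
  then have A: "poly sK 0 - sqrt ((poly sK 0)\<^sup>2 - 1) = A"
    unfolding s0 by (intro x_plus_inverse_root(1))
  obtain Y where "0 < Y" "Y \<le> 1" and Y: "max 1 (sigma_star Lam h m K) = (Y + 1 / Y) / 2"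
    using x_plus_inverse_surj[of "max 1 (sigma_star Lam h m K)"] by auto
  obtain q where "degree q \<le> K" and q: "\<forall>lam. link_sigma h m K lam = poly q lam"
    using link_sigma_poly by blast
  define X where "X = sqrt m ^ K"
  have "0 < X" using assms by (simp add: X_def)
  have "\<forall>l\<in>Lam. \<bar>poly q l\<bar> \<le> max 1 (sigma_star Lam h m K)"
    using abs_link_sigma_le_sigma_star[OF assms(1)] q by (metis le_max_iff_disj)
  then have "poly q 0 \<le> max 1 (sigma_star Lam h m K) * poly sK 0"
    by (intro optimal_link_poly_scaled_le[OF optimal \<open>degree q \<le> K\<close>]) auto
  moreover have "poly q 0 = (X + 1 / X) / 2"
    using q link_sigma_at_0[OF \<open>0 < m\<close>, of h K] by (simp add: X_def)
  ultimately have "(X + 1 / X) / 2 \<le> max 1 (sigma_star Lam h m K) * poly sK 0" by simp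
  then have "X + 1 / X \<le> 2 * (max 1 (sigma_star Lam h m K) * poly sK 0)"
    using mult_left_mono[of _ _ 2] by fastforce
  also have "\<dots> = (Y + 1 / Y) * (A + 1 / A) / 2" by (simp add: Y s0)
  finally have "X + 1 / X \<le> (Y + 1 / Y) * (A + 1 / A) / 2" .
  then have "A * Y \<le> X"
    using \<open>0 < X\<close> \<open>0 < Y\<close> \<open>Y \<le> 1\<close> \<open>0 < A\<close> \<open>A \<le> 1\<close> by (intro le_of_x_plus_inverse_le)
  then have "A powr (1 / real K) \<le> (X / Y) powr (1 / real K)"
    using \<open>0 < A\<close> \<open>0 < Y\<close> by (intro powr_mono2) (auto simp: pos_le_divide_eq)
  then show ?thesis
    using rate_factor_formula_eq[OF \<open>0 < m\<close> \<open>1 \<le> K\<close> \<open>0 < Y\<close> \<open>Y \<le> 1\<close> Y] by (simp add: A X_def)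
qed

lemma link_sigma_at_0_root:
  assumes "0 < m" and "m < 1" and "1 \<le> K"
  shows "link_sigma h m K 0 - sqrt ((link_sigma h m K 0)\<^sup>2 - 1) = sqrt m ^ K"
proof -
  have "0 < sqrt m ^ K" "sqrt m ^ K \<le> 1" using assms by (simp_all add: power_le_one)
  then show ?thesis unfolding link_sigma_at_0[OF assms(1)] by (rule x_plus_inverse_root(1))
qed

theorem proposition5:
  fixes Lam :: "real set" and mu L :: real and K :: nat
    and sK :: "real poly" and h :: "nat \<Rightarrow> real" and m :: real
  assumes "compact Lam" and "Lam \<subseteq> {mu..L}" and "0 < mu" and "mu < L"
    and "1 \<le> K"
    and "is_optimal_link_poly K Lam sK"
    and "0 < m" and "m < 1"
    and "\<forall>lam. link_sigma h m K lam = poly sK lam"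
  defines "s0 \<equiv> poly sK 0"
  defines "a \<equiv> s0 - sqrt (s0\<^sup>2 - 1)"
  shows
    "(\<forall>m' h'. 0 < m' \<longrightarrow> m' < 1 \<longrightarrow>
        rate_factor_formula Lam h m K \<le> rate_factor_formula Lam h' m' K)
     \<and> m = a powr (2 / real K)
     \<and> (\<forall>n lam. poly (res_poly h m K ((n + 2) * K)) lam =
          2 * a * poly sK lam * poly (res_poly h m K ((n + 1) * K)) lam
          - a\<^sup>2 * poly (res_poly h m K (n * K)) lam)
     \<and> (\<lambda>t. worst_rate Lam h m K t) \<in> O(\<lambda>t. real t * a powr (real t / real K))
     \<and> asymp_rate Lam h m K = ereal (a powr (1 / real K))"
proof -
  note s0_def = assms(10) and a_def = assms(11)
  have compact: "compact Lam" and "1 \<le> K" and optimal: "is_optimal_link_poly K Lam sK"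
    and "0 < m" "m < 1" and link: "\<forall>lam. link_sigma h m K lam = poly sK lam"
    using assms(1,5-9) .
  have L: "\<forall>l\<in>Lam. \<bar>l\<bar> \<le> L" using assms(2,3) by auto
  have "Lam \<noteq> {}" using optimal by (rule optimal_link_poly_nonempty)
  have sigma: "\<forall>l\<in>Lam. \<bar>link_sigma h m K l\<bar> \<le> 1"
    using optimal link by (simp add: is_optimal_link_poly_def)
  obtain l where "l \<in> Lam" and "\<bar>link_sigma h m K l\<bar> = 1"
    using optimal_link_poly_attains_1[OF compact optimal] link by auto
  have a: "a = sqrt m ^ K"
    using link_sigma_at_0_root[OF \<open>0 < m\<close> \<open>m < 1\<close> \<open>1 \<le> K\<close>, of h] link by (simp add: a_def s0_def)
  have a_powr: "a powr (x / real K) = sqrt m powr x" for x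
    unfolding a using \<open>0 < m\<close> \<open>1 \<le> K\<close> by (simp add: pow_powr_divide)
  have "rate_factor_formula Lam h m K = a powr (1 / real K)"
    using rate_factor_formula_eq_sqrt[OF \<open>Lam \<noteq> {}\<close> sigma] a_powr[of 1] \<open>0 < m\<close> by simp
  then have "rate_factor_formula Lam h m K \<le> rate_factor_formula Lam h' m' K" if "0 < m'" for h' m'
    using rate_factor_formula_ge[OF compact optimal \<open>1 \<le> K\<close> that] by (simp add: a_def s0_def)
  moreover have "m = a powr (2 / real K)" using a_powr[of 2] \<open>0 < m\<close> by simp
  moreover have "poly (res_poly h m K ((n + 2) * K)) lam =
      2 * a * poly sK lam * poly (res_poly h m K ((n + 1) * K)) lam - a\<^sup>2 * poly (res_poly h m K (n * K)) lam"
    for n lam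
    using res_poly_recurrence[OF \<open>0 < m\<close>, of h K n lam] link \<open>0 < m\<close> by (simp add: a sqrt_power_square)
  moreover have "(\<lambda>t. real t * a powr (real t / real K)) = (\<lambda>t. real t * sqrt m ^ t)"
    using a_powr \<open>0 < m\<close> by (simp add: powr_realpow)
  then have "(\<lambda>t. worst_rate Lam h m K t) \<in> O(\<lambda>t. real t * a powr (real t / real K))"
    using worst_rate_bigo[OF L \<open>Lam \<noteq> {}\<close> \<open>0 < m\<close> \<open>m < 1\<close> \<open>1 \<le> K\<close> sigma] by simp
  moreover have "asymp_rate Lam h m K = ereal (a powr (1 / real K))"
    using asymp_rate_eq_sqrt[OF L \<open>0 < m\<close> \<open>m < 1\<close> \<open>1 \<le> K\<close> sigma \<open>l \<in> Lam\<close>]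
      \<open>\<bar>link_sigma h m K l\<bar> = 1\<close> a_powr[of 1] \<open>0 < m\<close> by simp
  ultimately show ?thesis by blast
qed

end
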